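(* For every integer $n\ge0$, every $i\in\{0,2\}$ and every $m\in\{0,1,2,3,4\}$, the number of partitions $\pi$ of $5n+4$ with $\mathrm{srank}(\pi)\equiv i\pmod 4$ and $\text{2-quotient-rank}(\pi)\equiv m\pmod 5$ equals $\tfrac15 p_i(5n+4)$.
   Context: For a partition $\pi$, $\pi'$ is its conjugate, $\mathcal O(\pi)$ the number of odd parts, $\mathrm{srank}(\pi)=\mathcal O(\pi)-\mathcal O(\pi')$, and $p_i(n)$ ($i=0,2$) the number of partitions of $n$ with $\mathrm{srank}\equiv i\pmod 4$. $\nu(\pi)$ denotes the number of (positive) parts of $\pi$. $t$-quotient (here $t=2$): for $\pi=(\lambda_1\ge\lambda_2\ge\cdots)$ with $\lambda_j=0$ for $j$ large, let $S=\{\lambda_j-j: j\ge1\}\subset\mathbb Z$, and for $0\le c\le t-1$ let $S_c=\{k\in\mathbb Z: tk+c\in S\}$. Then $\hat\pi_c$ is the partition whose parts are the numbers $\#\{s\in S_c: s>g\}$ as $g$ ranges over the integers not in $S_c$ (only finitely many are positive). The 2-quotient of $\pi$ is $(\hat\pi_0,\hat\pi_1)$ (for $t=2$), and $\text{2-quotient-rank}(\pi)=\nu(\hat\pi_0)-\nu(\hat\pi_1)$. *)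

theory Defs
  imports Complex_Main
begin

definition partitions :: "nat \<Rightarrow> nat list set" where
  "partitions n = {xs. sorted_wrt (\<ge>) xs \<and> 0 \<notin> set xs \<and> sum_list xs = n}"

text \<open>Conjugate: the j-th part (j = 1..lambda_1) is the number of parts \<ge> j.\<close>
definition conjugate :: "nat list \<Rightarrow> nat list" where
  "conjugate xs = map (\<lambda>j. length (filter (\<lambda>x. x > j) xs))
                      [0..<(if xs = [] then 0 else hd xs)]"

definition num_odd :: "nat list \<Rightarrow> nat" where
  "num_odd xs = length (filter odd xs)"

definition srank :: "nat list \<Rightarrow> int" where
  "srank xs = int (num_odd xs) - int (num_odd (conjugate xs))"

definition p_srank :: "int \<Rightarrow> nat \<Rightarrow> nat" where
  "p_srank i n = card {xs \<in> partitions n. srank xs mod 4 = i}"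

definition part_at :: "nat list \<Rightarrow> nat \<Rightarrow> nat" where
  "part_at xs j = (if 1 \<le> j \<and> j \<le> length xs then xs ! (j - 1) else 0)"

definition beta_set :: "nat list \<Rightarrow> int set" where
  "beta_set xs = {int (part_at xs j) - int j | j. j \<ge> 1}"

definition beta_sub :: "nat \<Rightarrow> nat \<Rightarrow> nat list \<Rightarrow> int set" where
  "beta_sub t c xs = {k. int t * k + int c \<in> beta_set xs}"

text \<open>The parts of the c-th t-quotient partition are the numbers
  card {s \<in> S_c. s > g} for g \<notin> S_c (taking the positive ones); hence its
  number of (positive) parts is the number of such g giving a positive value.\<close>
definition quotient_nu :: "nat \<Rightarrow> nat \<Rightarrow> nat list \<Rightarrow> nat" where
  "quotient_nu t c xs =
     card {g. g \<notin> beta_sub t c xs \<and> card {s \<in> beta_sub t c xs. s > g} > 0}"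

definition two_quotient_rank :: "nat list \<Rightarrow> int" where
  "two_quotient_rank xs = int (quotient_nu 2 0 xs) - int (quotient_nu 2 1 xs)"

end

theory Submission
  imports Defs "HOL-Computational_Algebra.Formal_Power_Series"
begin

text \<open>A partition of \<open>N\<close> is encoded by its beta-set \<open>B\<close> with \<open>2N\<close> elements. The even and the
  odd elements of \<open>B\<close>, halved, are the beta-sets of the two components of the 2-quotient, so the
  2-quotient-rank is a difference of gap counts, while the srank modulo 4 only depends on the
  number \<open>c\<close> of even elements. For fixed \<open>c\<close>, the sum of \<open>z^(2-quotient-rank)\<close> is the
  coefficient of some \<open>q^w\<close> in \<open>\<Prod>\<^sub>k 1/((1 - z q^k)(1 - z^-1 q^k))\<close>, and \<open>N \<equiv> 4 (mod 5)\<close>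
  forces \<open>w \<equiv> 2, 3, 4 (mod 5)\<close>. For a primitive fifth root of unity \<open>z\<close> this product is the
  Jacobi triple product at \<open>x = z^2\<close> times a series in \<open>q^5\<close>, and the theta series
  \<open>\<Sum>\<^sub>j (-x)^j q^(j(j-1)/2)\<close> has no terms \<open>q^w\<close> with \<open>w \<equiv> 2, 4 (mod 5)\<close>, while for
  \<open>w \<equiv> 3\<close> the terms \<open>j\<close> and \<open>1 - j\<close> cancel. So these sums vanish at all nontrivial fifth
  roots of unity, and the roots-of-unity filter gives the equidistribution.\<close>

unbundle fps_syntax

section \<open>Beta-sets and their generating function\<close>

definition tri :: "nat \<Rightarrow> nat" where
  "tri m = m * (m - 1) div 2"

lemma tri_0 [simp]: "tri 0 = 0"
  by (simp add: tri_def)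

lemma tri_Suc: "tri (Suc m) = tri m + m"
  unfolding tri_def by (induction m) (auto simp: algebra_simps)

lemma two_tri_int: "2 * int (tri m) = int m * (int m - 1)"
  by (induction m) (auto simp: tri_Suc algebra_simps)

lemma sum_lessThan_eq_tri: "(\<Sum>i<m. i) = tri m"
  by (induction m) (simp_all add: tri_Suc)

lemma sum_lessThan_reverse_eq_tri: "(\<Sum>i<m. m - Suc i) = tri m"
  using sum.nat_diff_reindex[of "\<lambda>i. i" m] by (simp add: sum_lessThan_eq_tri)

lemma card_le_Suc_Max:
  fixes B :: "nat set"
  assumes "finite B" "B \<noteq> {}"
  shows "card B \<le> Suc (Max B)"
proof -
  have "card B \<le> card {0..Max B}"
    using assms by (intro card_mono) auto
  then show ?thesis by simp
qed

lemma tri_card_le_sum: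
  fixes B :: "nat set"
  assumes "finite B"
  shows "tri (card B) \<le> \<Sum>B"
  using assms
proof (induction "card B" arbitrary: B)
  case (Suc m)
  then have "B \<noteq> {}" by auto
  then have "Max B \<in> B" using Suc by simp
  then have "\<Sum>B = Max B + \<Sum>(B - {Max B})"
    using Suc by (simp add: sum.remove)
  moreover have "tri m \<le> \<Sum>(B - {Max B})"
  proof -
    have "card (B - {Max B}) = m"
      using Suc.hyps(2) Suc.prems \<open>Max B \<in> B\<close> by simp
    then show ?thesis
      using Suc.hyps(1) Suc.prems by (metis finite_Diff)
  qed
  moreover have "m \<le> Max B"
    using Suc card_le_Suc_Max[of B] \<open>B \<noteq> {}\<close> by simp
  ultimately show ?case by (simp add: tri_Suc flip: Suc.hyps(2))
qed simp

text \<open>The \<open>m\<close> elements \<open>b\<^sub>1 > \<dots> > b\<^sub>m\<close> of a set in \<open>beta_sets m r\<close> are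
  \<open>b\<^sub>j = \<lambda>\<^sub>j + m - j\<close> for a partition \<open>\<lambda>\<close> of \<open>r\<close> into at most \<open>m\<close> parts.\<close>
definition beta_sets :: "nat \<Rightarrow> nat \<Rightarrow> nat set set" where
  "beta_sets m r = {B. finite B \<and> card B = m \<and> \<Sum>B = r + tri m}"

lemma beta_sets_subset_Pow: "beta_sets m r \<subseteq> Pow {0..r + m}"
proof
  fix B assume B: "B \<in> beta_sets m r"
  then have fin: "finite B" and card: "card B = m" and sum: "\<Sum>B = r + tri m"
    by (auto simp: beta_sets_def)
  have "b \<le> r + m" if "b \<in> B" for b
  proof -
    have "\<Sum>B = b + \<Sum>(B - {b})"
      using fin that by (simp add: sum.remove)
    moreover have "tri (m - 1) \<le> \<Sum>(B - {b})"
      using tri_card_le_sum[of "B - {b}"] fin that card by simp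
    moreover have "tri m = tri (m - 1) + (m - 1)"
      using tri_Suc[of "m - 1"] that card fin by (cases m) auto
    ultimately show ?thesis using sum by linarith
  qed
  then show "B \<in> Pow {0..r + m}" by auto
qed

lemma finite_beta_sets [simp]: "finite (beta_sets m r)"
  using beta_sets_subset_Pow by (rule finite_subset) simp

text \<open>For a beta-set this is the largest part of its partition.\<close>
definition gaps :: "nat set \<Rightarrow> nat" where
  "gaps B = (if B = {} then 0 else Suc (Max B) - card B)"

lemma card_gaps:
  assumes "finite B"
  shows "card {b. b \<notin> B \<and> (\<exists>a\<in>B. b < a)} = gaps B"
proof (cases "B = {}")
  case False
  have "{b. b \<notin> B \<and> (\<exists>a\<in>B. b < a)} = {0..<Max B} - (B - {Max B})"
    using assms False Max_gr_iff[OF assms False] by auto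
  moreover have "B - {Max B} \<subseteq> {0..<Max B}"
    using Max_ge[OF assms] by fastforce
  ultimately show ?thesis
    using assms False card_le_Suc_Max[OF assms False] card_gt_0_iff[of B]
    by (simp add: card_Diff_subset finite_subset gaps_def)
qed (simp add: gaps_def)

lemma gaps_Suc_image:
  assumes "finite B" "B \<noteq> {}"
  shows "gaps (Suc ` B) = Suc (gaps B)"
  using assms card_le_Suc_Max[OF assms]
  by (simp add: gaps_def card_image mono_Max_commute[symmetric] mono_def)

lemma gaps_insert_0_Suc_image:
  assumes "finite B"
  shows "gaps (insert 0 (Suc ` B)) = gaps B"
proof (cases "B = {}")
  case False
  then show ?thesis
    using assms card_le_Suc_Max[OF assms]
    by (simp add: gaps_def card_image mono_Max_commute[symmetric] mono_def)
qed (simp add: gaps_def)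

lemma sum_Suc_image: "finite B \<Longrightarrow> \<Sum>(Suc ` B) = \<Sum>B + card B"
  by (simp add: sum.reindex sum_Suc)

lemma Suc_image_pred:
  assumes "0 \<notin> B"
  shows "Suc ` ((\<lambda>b. b - 1) ` B) = B"
proof -
  have "(\<lambda>b. Suc (b - 1)) ` B = id ` B"
  proof (intro image_cong refl)
    fix b assume "b \<in> B"
    then have "b \<noteq> 0" using assms by metis
    then show "Suc (b - 1) = id b" by simp
  qed
  then show ?thesis by (simp add: image_image)
qed

lemma beta_sets_Suc_with_0:
  "{B \<in> beta_sets (Suc m) n. 0 \<in> B} = (\<lambda>B. insert 0 (Suc ` B)) ` beta_sets m n"
proof (intro set_eqI iffI)
  fix B assume B: "B \<in> {B \<in> beta_sets (Suc m) n. 0 \<in> B}"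
  define B' where "B' = (\<lambda>b. b - 1) ` (B - {0})"
  have B_eq: "B = insert 0 (Suc ` B')"
    using B Suc_image_pred[of "B - {0}"] by (auto simp: B'_def)
  moreover have "B' \<in> beta_sets m n"
  proof -
    have "finite B'"
      using B by (simp add: B'_def beta_sets_def)
    moreover from B have "card (insert 0 (Suc ` B')) = Suc m"
      and "\<Sum>(insert 0 (Suc ` B')) = n + tri (Suc m)"
      unfolding B_eq[symmetric] by (auto simp: beta_sets_def)
    ultimately show ?thesis
      by (simp add: beta_sets_def card_image sum_Suc_image tri_Suc)
  qed
  ultimately show "B \<in> (\<lambda>B. insert 0 (Suc ` B)) ` beta_sets m n" by blast
qed (auto simp: beta_sets_def card_image sum_Suc_image tri_Suc)

lemma beta_sets_Suc_without_0:
  "{B \<in> beta_sets (Suc m) n. 0 \<notin> B} =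
     (if Suc m \<le> n then image Suc ` beta_sets (Suc m) (n - Suc m) else {})"
proof (intro set_eqI iffI)
  fix B assume B: "B \<in> {B \<in> beta_sets (Suc m) n. 0 \<notin> B}"
  define B' where "B' = (\<lambda>b. b - 1) ` B"
  have B_eq: "B = Suc ` B'"
    using B Suc_image_pred[of B] by (simp add: B'_def)
  have fin: "finite B'" and card: "card B' = Suc m" and sum: "\<Sum>B' + Suc m = n + tri (Suc m)"
    using B by (auto simp: B_eq beta_sets_def card_image sum_Suc_image finite_image_iff)
  have "tri (Suc m) \<le> \<Sum>B'"
    using tri_card_le_sum[OF fin] card by simp
  then have "Suc m \<le> n" and "B' \<in> beta_sets (Suc m) (n - Suc m)"
    using fin card sum by (auto simp: beta_sets_def)
  then show "B \<in> (if Suc m \<le> n then image Suc ` beta_sets (Suc m) (n - Suc m) else {})"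
    using B_eq by auto
qed (auto simp: beta_sets_def card_image sum_Suc_image split: if_splits)

definition geom_fps :: "nat \<Rightarrow> 'a::comm_ring_1 \<Rightarrow> 'a fps" where
  "geom_fps k z = Abs_fps (\<lambda>n. if k dvd n then z ^ (n div k) else 0)"

lemma geom_fps_inverse:
  assumes "0 < k"
  shows "(1 - fps_const z * fps_X ^ k) * geom_fps k z = 1"
proof (rule fps_ext)
  fix n
  have "(fps_const z * fps_X ^ k * geom_fps k z) $ n = (if n < k then 0 else z * geom_fps k z $ (n - k))"
    by (simp add: fps_X_power_mult_nth mult.assoc)
  moreover have "k dvd n \<Longrightarrow> n div k = Suc ((n - k) div k)" if "k \<le> n"
    using assms that by (auto simp: le_div_geq)
  ultimately show "((1 - fps_const z * fps_X ^ k) * geom_fps k z) $ n = (1 :: 'a fps) $ n"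
    using assms by (auto simp: algebra_simps geom_fps_def dvd_minus_self not_less dest: dvd_imp_le)
qed

definition beta_fps :: "nat \<Rightarrow> 'a::comm_ring_1 \<Rightarrow> 'a fps" where
  "beta_fps m z = Abs_fps (\<lambda>r. \<Sum>B\<in>beta_sets m r. z ^ gaps B)"

lemma beta_fps_0: "beta_fps 0 z = 1"
proof (rule fps_ext)
  fix n
  have "beta_sets 0 n = (if n = 0 then {{}} else {})"
    by (auto simp: beta_sets_def card_eq_0_iff tri_def)
  then show "beta_fps 0 z $ n = (1 :: 'a fps) $ n"
    by (simp add: beta_fps_def gaps_def)
qed

lemma beta_fps_Suc_nth:
  "beta_fps (Suc m) z $ n =
     beta_fps m z $ n + (if Suc m \<le> n then z * beta_fps (Suc m) z $ (n - Suc m) else 0)"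
proof -
  let ?S = "beta_sets (Suc m) n"
  have "beta_fps (Suc m) z $ n =
      (\<Sum>B\<in>{B \<in> ?S. 0 \<in> B}. z ^ gaps B) + (\<Sum>B\<in>{B \<in> ?S. 0 \<notin> B}. z ^ gaps B)"
    unfolding beta_fps_def using sum.Int_Diff[OF finite_beta_sets, of _ "Suc m" n "{B. 0 \<in> B}"]
    by (simp add: Int_def set_diff_eq conj_commute)
  also have "(\<Sum>B\<in>{B \<in> ?S. 0 \<in> B}. z ^ gaps B) = beta_fps m z $ n"
  proof -
    have "inj_on (\<lambda>B. insert 0 (Suc ` B)) X" for X :: "nat set set"
      by (rule inj_onI) (metis Diff_insert_absorb image_iff inj_image_eq_iff inj_Suc nat.distinct(1))
    then show ?thesis
      unfolding beta_sets_Suc_with_0 beta_fps_def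
      by (simp add: sum.reindex gaps_insert_0_Suc_image beta_sets_def)
  qed
  also have "(\<Sum>B\<in>{B \<in> ?S. 0 \<notin> B}. z ^ gaps B) =
      (if Suc m \<le> n then z * beta_fps (Suc m) z $ (n - Suc m) else 0)"
  proof -
    have "inj_on (image Suc) X" for X :: "nat set set"
      by (rule inj_onI) (simp add: inj_image_eq_iff)
    moreover have "z ^ gaps (Suc ` B) = z * z ^ gaps B" if "B \<in> beta_sets (Suc m) k" for B k
      using that by (subst gaps_Suc_image) (auto simp: beta_sets_def)
    ultimately show ?thesis
      unfolding beta_sets_Suc_without_0 beta_fps_def
      by (simp add: sum.reindex sum_distrib_left)
  qed
  finally show ?thesis .
qed

lemma beta_fps_Suc: "beta_fps (Suc m) z = beta_fps m z * geom_fps (Suc m) z"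
proof -
  let ?g = "1 - fps_const z * fps_X ^ Suc m"
  have "beta_fps (Suc m) z = beta_fps m z + fps_const z * fps_X ^ Suc m * beta_fps (Suc m) z"
    by (rule fps_ext) (simp add: beta_fps_Suc_nth fps_X_power_mult_nth mult.assoc not_le, arith)
  then have "?g * beta_fps (Suc m) z = beta_fps m z"
    by (simp add: algebra_simps)
  then have "(?g * geom_fps (Suc m) z) * beta_fps (Suc m) z = beta_fps m z * geom_fps (Suc m) z"
    by (metis mult.assoc mult.commute)
  moreover have "?g * geom_fps (Suc m) z = 1"
    by (rule geom_fps_inverse) simp
  ultimately show ?thesis
    by simp
qed

lemma beta_fps_eq_prod: "beta_fps m z = (\<Prod>k\<in>{1..m}. geom_fps k z)"
proof (induction m)
  case (Suc m)
  have "{1..Suc m} = insert (Suc m) {1..m}" by auto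
  then show ?case
    using Suc by (simp add: beta_fps_Suc mult.commute)
qed (simp add: beta_fps_0)

lemma mult_geom_fps_nth_below:
  assumes "n < k"
  shows "(A * geom_fps k z) $ n = A $ n"
proof -
  have "(A * geom_fps k z) $ n = (\<Sum>i=0..n. if i = n then A $ i else 0)"
    unfolding fps_mult_nth using assms nat_dvd_not_less[of "n - _" k]
    by (intro sum.cong) (auto simp: geom_fps_def)
  then show ?thesis by simp
qed

lemma beta_fps_nth_stable:
  assumes "n \<le> m" "n \<le> m'"
  shows "beta_fps m z $ n = beta_fps m' z $ n"
proof -
  have "beta_fps m' z $ n = beta_fps m z $ n" if "n \<le> m" "m \<le> m'" for m m'
    using that(2)
  proof (induction m' rule: dec_induct)
    case (step k)
    then show ?case
      using \<open>n \<le> m\<close> by (simp add: beta_fps_Suc mult_geom_fps_nth_below)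
  qed simp
  then show ?thesis
    using assms by (metis nat_le_linear)
qed

lemma card_beta_sets_stable:
  assumes "r \<le> m" "r \<le> m'"
  shows "card (beta_sets m r) = card (beta_sets m' r)"
  using beta_fps_nth_stable[OF assms, of "1::int"] by (simp add: beta_fps_def)

lemma fps_mult_nth_cong:
  assumes "\<And>i. i \<le> n \<Longrightarrow> A $ i = B $ i"
  shows "(A * C) $ n = (B * C) $ n"
  using assms by (simp add: fps_mult_nth)

lemma fps_mult_nth_eq_sum_pairs:
  fixes f :: "'b \<Rightarrow> nat" and g :: "'c \<Rightarrow> nat" and P Q :: "'a::comm_semiring_1 fps"
  assumes "finite S" "finite T"
    and P: "\<And>t. t \<le> n \<Longrightarrow> P $ t = (\<Sum>x\<in>{x\<in>S. f x = t}. u x)"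
    and Q: "\<And>t. t \<le> n \<Longrightarrow> Q $ t = (\<Sum>y\<in>{y\<in>T. g y = t}. v y)"
  shows "(P * Q) $ n = (\<Sum>(x, y)\<in>{(x, y)\<in>S \<times> T. f x + g y = n}. u x * v y)"
proof -
  have "(P * Q) $ n = (\<Sum>t=0..n. \<Sum>x\<in>S. \<Sum>y\<in>T. if f x = t \<and> g y = n - t then u x * v y else 0)"
    unfolding fps_mult_nth using assms(1,2)
    by (intro sum.cong refl) (auto simp: P Q sum.inter_filter sum_product intro!: sum.cong)
  also have "\<dots> = (\<Sum>x\<in>S. \<Sum>y\<in>T. \<Sum>t=0..n. if f x = t \<and> g y = n - t then u x * v y else 0)"
    by (subst sum.swap, intro sum.cong refl, rule sum.swap)
  also have "\<dots> = (\<Sum>x\<in>S. \<Sum>y\<in>T. if f x + g y = n then u x * v y else 0)"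
  proof (intro sum.cong refl)
    fix x y
    have "(\<Sum>t=0..n. if f x = t \<and> g y = n - t then u x * v y else 0) =
        (\<Sum>t=0..n. if t = f x then (if g y = n - f x then u x * v y else 0) else 0)"
      by (intro sum.cong) auto
    then show "(\<Sum>t=0..n. if f x = t \<and> g y = n - t then u x * v y else 0) =
        (if f x + g y = n then u x * v y else 0)"
      by (auto simp: sum.delta')
  qed
  also have "\<dots> = (\<Sum>p\<in>S \<times> T. if f (fst p) + g (snd p) = n then u (fst p) * v (snd p) else 0)"
    by (simp add: sum.cartesian_product case_prod_beta)
  also have "\<dots> = (\<Sum>p\<in>{p\<in>S \<times> T. f (fst p) + g (snd p) = n}. u (fst p) * v (snd p))"
    using assms(1,2) by (simp add: sum.inter_filter)
  also have "{p\<in>S \<times> T. f (fst p) + g (snd p) = n} = {(x, y)\<in>S \<times> T. f x + g y = n}"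
    by auto
  finally show ?thesis
    by (simp add: case_prod_beta)
qed

section \<open>A truncated Jacobi triple product\<close>

lemma prod_one_minus_X_power_nth:
  fixes a :: "'a::comm_ring_1"
  assumes "finite K"
  shows "(\<Prod>k\<in>K. 1 - fps_const a * fps_X ^ k) $ n = (\<Sum>A\<in>{A\<in>Pow K. \<Sum>A = n}. (-a) ^ card A)"
proof -
  have "(\<Prod>k\<in>K. 1 - fps_const a * fps_X ^ k) = (\<Prod>k\<in>K. fps_const (-a) * fps_X ^ k + 1)"
    by (simp flip: fps_const_neg)
  also have "\<dots> = (\<Sum>A\<in>Pow K. (\<Prod>k\<in>A. fps_const (-a) * fps_X ^ k) * (\<Prod>k\<in>K - A. 1))"
    by (rule prod_add[OF assms])
  also have "\<dots> = (\<Sum>A\<in>Pow K. fps_const ((-a) ^ card A) * fps_X ^ \<Sum>A)"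
    by (simp add: prod.distrib power_sum fps_const_power)
  finally have "(\<Prod>k\<in>K. 1 - fps_const a * fps_X ^ k) $ n =
      (\<Sum>A\<in>Pow K. if \<Sum>A = n then (-a) ^ card A else 0)"
    by (auto simp: fps_sum_nth intro!: sum.cong)
  then show ?thesis
    using assms by (simp only: sum.inter_filter finite_Pow_iff)
qed

definition tri_int :: "int \<Rightarrow> nat" where
  "tri_int j = nat (j * (j - 1) div 2)"

lemma two_tri_int_int: "2 * int (tri_int j) = j * (j - 1)"
proof -
  have "0 \<le> j * (j - 1)"
    by (cases "j \<le> 0") (auto simp: mult_nonpos_nonpos)
  moreover have "even (j * (j - 1))"
    by simp
  ultimately show ?thesis
    by (auto simp: tri_int_def)
qed

lemma tri_add_int: "int (tri (nat (int L + j))) = int (tri L) + int L * j + int (tri_int j)"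
  if "0 \<le> int L + j"
  using that two_tri_int[of "nat (int L + j)"] two_tri_int[of L] two_tri_int_int[of j]
  by (simp add: algebra_simps)

lemma tri_int_le_imp_range:
  fixes j :: int
  assumes "tri_int j \<le> M"
  shows "- int M \<le> j \<and> j \<le> int M + 1"
proof (rule ccontr)
  have jj: "j * (j - 1) \<le> 2 * int M"
    using assms two_tri_int_int[of j] by linarith
  assume "\<not> (- int M \<le> j \<and> j \<le> int M + 1)"
  then have "(int M + 1) * (int M + 2) \<le> j * (j - 1)"
  proof (elim disjE[OF de_Morgan_conj[THEN iffD1]])
    assume "\<not> - int M \<le> j"
    then have "(int M + 1) * (int M + 2) \<le> (- j) * (1 - j)"
      by (intro mult_mono) auto
    then show ?thesis by (simp add: algebra_simps)
  next
    assume "\<not> j \<le> int M + 1"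
    then have "(int M + 2) * (int M + 1) \<le> j * (j - 1)"
      by (intro mult_mono) auto
    then show ?thesis by (simp add: algebra_simps)
  qed
  moreover have "(int M + 1) * (int M + 2) = int M * int M + 3 * int M + 2"
    by (simp add: algebra_simps)
  moreover have "0 \<le> int M * int M"
    by simp
  ultimately show False
    using jj by linarith
qed

text \<open>The bijective proof of the Jacobi triple product: pairs \<open>(A, C)\<close> correspond to finite
  sets \<open>B\<close> of naturals, and the charge \<open>card B - L\<close> is \<open>card A - card C\<close>.\<close>
definition jtp_set :: "nat \<Rightarrow> nat set \<times> nat set \<Rightarrow> nat set" where
  "jtp_set L = (\<lambda>(A, C). (\<lambda>a. a + L) ` A \<union> ({0..<L} - (\<lambda>c. L - c) ` C))"

definition jtp_pair :: "nat \<Rightarrow> nat set \<Rightarrow> nat set \<times> nat set" where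
  "jtp_pair L B = ((\<lambda>b. b - L) ` {b\<in>B. L \<le> b}, (\<lambda>b. L - b) ` ({0..<L} - B))"

lemma jtp_pair_jtp_set:
  assumes "C \<subseteq> {1..L}"
  shows "jtp_pair L (jtp_set L (A, C)) = (A, C)"
proof -
  have "{b \<in> jtp_set L (A, C). L \<le> b} = (\<lambda>a. a + L) ` A"
    by (auto simp: jtp_set_def)
  then have "(\<lambda>b. b - L) ` {b \<in> jtp_set L (A, C). L \<le> b} = A"
    by (simp add: image_image)
  moreover have "{0..<L} - jtp_set L (A, C) = (\<lambda>c. L - c) ` C"
    using assms by (force simp: jtp_set_def)
  then have "(\<lambda>b. L - b) ` ({0..<L} - jtp_set L (A, C)) = C"
    using assms by (force simp: image_image intro: image_eqI)
  ultimately show ?thesis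
    by (simp add: jtp_pair_def)
qed

lemma jtp_set_jtp_pair: "jtp_set L (jtp_pair L B) = B"
proof -
  have "(\<lambda>a. a + L) ` (\<lambda>b. b - L) ` {b \<in> B. L \<le> b} = {b \<in> B. L \<le> b}"
    by (force simp: image_image intro: image_eqI)
  moreover have "(\<lambda>c. L - c) ` (\<lambda>b. L - b) ` ({0..<L} - B) = {0..<L} - B"
    by (force simp: image_image intro: image_eqI)
  ultimately show ?thesis
    by (auto simp: jtp_set_def jtp_pair_def)
qed

lemma card_sum_Diff_reflect:
  assumes "C \<subseteq> {1..L}"
  shows "card ({0..<L} - (\<lambda>c. L - c) ` C) = L - card C"
    and "int (\<Sum>({0..<L} - (\<lambda>c. L - c) ` C)) = int (tri L) - int L * int (card C) + int (\<Sum>C)"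
proof -
  let ?R = "(\<lambda>c. L - c) ` C"
  have R: "?R \<subseteq> {0..<L}"
    using assms by auto
  have inj: "inj_on (\<lambda>c. L - c) C"
    using assms by (intro inj_onI) (metis atLeastAtMost_iff diff_diff_cancel subsetD)
  then show "card ({0..<L} - ?R) = L - card C"
    using R by (simp add: card_Diff_subset finite_subset card_image)
  have "int (\<Sum>?R) = (\<Sum>c\<in>C. int L - int c)"
    using assms by (auto simp: sum.reindex[OF inj] of_nat_diff intro!: sum.cong)
  moreover have "\<Sum>{0..<L} = \<Sum>({0..<L} - ?R) + \<Sum>?R"
    using R by (simp add: sum.subset_diff[of ?R "{0..<L}" "\<lambda>x. x"])
  ultimately show "int (\<Sum>({0..<L} - ?R)) = int (tri L) - int L * int (card C) + int (\<Sum>C)"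
    by (simp add: sum_subtractf atLeast0LessThan sum_lessThan_eq_tri)
qed

lemma jtp_set_card_sum:
  assumes "finite A" "C \<subseteq> {1..L}"
  defines "B \<equiv> jtp_set L (A, C)"
  shows "finite B"
    and "int (card B) = int L + int (card A) - int (card C)"
    and "\<Sum>B + tri_int (int (card B) - int L) = \<Sum>A + \<Sum>C + tri (card B)"
proof -
  let ?R = "{0..<L} - (\<lambda>c. L - c) ` C"
  have B: "B = (\<lambda>a. a + L) ` A \<union> ?R" and disj: "(\<lambda>a. a + L) ` A \<inter> ?R = {}"
    by (auto simp: B_def jtp_set_def)
  show "finite B"
    using assms(1) by (simp add: B)
  have "card C \<le> L"
    using card_mono[OF _ assms(2)] by simp
  then show card_B: "int (card B) = int L + int (card A) - int (card C)"
    using assms(1) disj card_sum_Diff_reflect(1)[OF assms(2)] by (simp add: B card_Un_disjoint card_image)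
  have "int (\<Sum>B) = int (\<Sum>A) + int (\<Sum>C) + int L * (int (card A) - int (card C)) + int (tri L)"
    using assms(1) disj card_sum_Diff_reflect(2)[OF assms(2)]
    by (simp add: B sum.union_disjoint sum.reindex sum.distrib algebra_simps)
  moreover have "int (tri (card B)) = int (tri L) + int L * (int (card A) - int (card C))
      + int (tri_int (int (card B) - int L))"
  proof -
    have "card B = nat (int L + (int (card A) - int (card C)))"
      using card_B by (metis add_diff_eq nat_int)
    then show ?thesis
      using tri_add_int[of L "int (card A) - int (card C)"] card_B by simp
  qed
  ultimately show "\<Sum>B + tri_int (int (card B) - int L) = \<Sum>A + \<Sum>C + tri (card B)"
    by linarith
qed

definition jtp_pairs :: "nat \<Rightarrow> nat \<Rightarrow> (nat set \<times> nat set) set" where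
  "jtp_pairs M i = {(A, C). A \<subseteq> {0..M} \<and> C \<subseteq> {1..M} \<and> \<Sum>A + \<Sum>C = i}"

definition jtp_sets :: "nat \<Rightarrow> nat \<Rightarrow> nat set set" where
  "jtp_sets L i = {B. finite B \<and> \<Sum>B + tri_int (int (card B) - int L) = i + tri (card B)}"

lemma bij_betw_jtp_set:
  assumes "i \<le> M" "M < L"
  shows "bij_betw (jtp_set L) (jtp_pairs M i) (jtp_sets L i)"
proof (rule bij_betw_byWitness[where f' = "jtp_pair L"])
  show "\<forall>p\<in>jtp_pairs M i. jtp_pair L (jtp_set L p) = p"
    using assms(2) by (auto simp: jtp_pairs_def intro!: jtp_pair_jtp_set)
  show "\<forall>B\<in>jtp_sets L i. jtp_set L (jtp_pair L B) = B"
    by (simp add: jtp_set_jtp_pair)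
  show "jtp_set L ` jtp_pairs M i \<subseteq> jtp_sets L i"
  proof
    fix B assume "B \<in> jtp_set L ` jtp_pairs M i"
    then obtain A C where "(A, C) \<in> jtp_pairs M i" "B = jtp_set L (A, C)"
      by auto
    then have "A \<subseteq> {0..M}" "C \<subseteq> {1..L}" "\<Sum>A + \<Sum>C = i"
      using assms(2) by (auto simp: jtp_pairs_def)
    then show "B \<in> jtp_sets L i"
      using \<open>B = jtp_set L (A, C)\<close> jtp_set_card_sum[of A C L] finite_subset by (auto simp: jtp_sets_def)
  qed
  show "jtp_pair L ` jtp_sets L i \<subseteq> jtp_pairs M i"
  proof
    fix p assume "p \<in> jtp_pair L ` jtp_sets L i"
    then obtain B where B: "B \<in> jtp_sets L i" "p = jtp_pair L B"
      by auto
    obtain A C where AC: "jtp_pair L B = (A, C)"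
      by fastforce
    have "finite A" "C \<subseteq> {1..L}" "finite C"
      using B(1) AC by (auto simp: jtp_sets_def jtp_pair_def)
    moreover have "jtp_set L (A, C) = B"
      using jtp_set_jtp_pair[of L B] AC by simp
    ultimately have sum: "\<Sum>A + \<Sum>C = i"
      using B(1) jtp_set_card_sum(3)[of A C L] by (simp add: jtp_sets_def)
    have "a \<le> M" if "a \<in> A" for a
      using member_le_sum[OF that, of id] \<open>finite A\<close> sum assms(1) by simp
    moreover have "c \<le> M" if "c \<in> C" for c
      using member_le_sum[OF that, of id] \<open>finite C\<close> sum assms(1) by simp
    ultimately show "p \<in> jtp_pairs M i"
      using B(2) AC sum \<open>C \<subseteq> {1..L}\<close> by (auto simp: jtp_pairs_def)
  qed
qed

lemma jtp_sets_with_card: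
  "{B \<in> jtp_sets L i. card B = m} =
     (if tri_int (int m - int L) \<le> i then beta_sets m (i - tri_int (int m - int L)) else {})"
proof (cases "tri_int (int m - int L) \<le> i")
  case False
  have "tri m \<le> \<Sum>B" if "B \<in> jtp_sets L i" "card B = m" for B
    using that tri_card_le_sum[of B] by (simp add: jtp_sets_def)
  then show ?thesis
    using False by (force simp: jtp_sets_def)
qed (auto simp: jtp_sets_def beta_sets_def)

lemma jtp_prod_nth_eq_sum_jtp_sets:
  fixes x y :: "'a::field"
  assumes "x * y = 1" "i \<le> M" "M < L"
  shows "((\<Prod>k\<in>{0..M}. 1 - fps_const x * fps_X ^ k) * (\<Prod>k\<in>{1..M}. 1 - fps_const y * fps_X ^ k)) $ i =
    (\<Sum>B\<in>jtp_sets L i. (-x) powi (int (card B) - int L))"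
proof -
  have weight: "(-x) ^ a * (-y) ^ c = (-x) powi (int a - int c)" for a c
  proof -
    have "x \<noteq> 0" and y: "-y = inverse (-x)"
      using assms(1) inverse_unique[OF assms(1)] by auto
    then have "(-x) powi (int a - int c) = (-x) ^ a * inverse ((-x) ^ c)"
      by (simp add: power_int_diff divide_inverse)
    also have "inverse ((-x) ^ c) = (-y) ^ c"
      by (simp only: y power_inverse)
    finally show ?thesis ..
  qed
  have "((\<Prod>k\<in>{0..M}. 1 - fps_const x * fps_X ^ k) * (\<Prod>k\<in>{1..M}. 1 - fps_const y * fps_X ^ k)) $ i =
      (\<Sum>(A, C)\<in>{(A, C)\<in>Pow {0..M} \<times> Pow {1..M}. \<Sum>A + \<Sum>C = i}. (-x) ^ card A * (-y) ^ card C)"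
    by (rule fps_mult_nth_eq_sum_pairs) (simp_all add: prod_one_minus_X_power_nth)
  also have "{(A, C)\<in>Pow {0..M} \<times> Pow {1..M}. \<Sum>A + \<Sum>C = i} = jtp_pairs M i"
    by (auto simp: jtp_pairs_def)
  also have "(\<Sum>(A, C)\<in>jtp_pairs M i. (-x) ^ card A * (-y) ^ card C) =
      (\<Sum>p\<in>jtp_pairs M i. (-x) powi (int (card (jtp_set L p)) - int L))"
  proof (intro sum.cong refl, clarify)
    fix A C assume "(A, C) \<in> jtp_pairs M i"
    then have "finite A" "C \<subseteq> {1..L}"
      using assms(3) finite_subset by (auto simp: jtp_pairs_def)
    then show "(-x) ^ card A * (-y) ^ card C = (-x) powi (int (card (jtp_set L (A, C))) - int L)"
      using jtp_set_card_sum(2) weight by simp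
  qed
  also have "\<dots> = (\<Sum>B\<in>jtp_sets L i. (-x) powi (int (card B) - int L))"
    by (rule sum.reindex_bij_betw[OF bij_betw_jtp_set[OF assms(2,3)]])
  finally show ?thesis .
qed

definition theta_fps :: "nat \<Rightarrow> 'a::field \<Rightarrow> 'a fps" where
  "theta_fps M x = (\<Sum>j=-int M..int M+1. fps_const ((-x) powi j) * fps_X ^ tri_int j)"

lemma theta_fps_mult_beta_fps_nth:
  "(theta_fps M x * beta_fps M 1) $ i = (\<Sum>j=-int M..int M+1.
     (-x) powi j * (if tri_int j \<le> i then of_nat (card (beta_sets M (i - tri_int j))) else 0))"
  unfolding theta_fps_def sum_distrib_right fps_sum_nth
  by (intro sum.cong refl) (simp add: mult.assoc fps_X_power_mult_nth beta_fps_def)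

lemma card_jtp_sets_charge:
  assumes "i \<le> M" "j \<in> {-int M..int M+1}"
  shows "card {B \<in> jtp_sets (2 * M + 2) i. int (card B) - int (2 * M + 2) = j} =
    (if tri_int j \<le> i then card (beta_sets M (i - tri_int j)) else 0)"
proof -
  define m where "m = nat (int (2 * M + 2) + j)"
  have "{B \<in> jtp_sets (2 * M + 2) i. int (card B) - int (2 * M + 2) = j} =
      {B \<in> jtp_sets (2 * M + 2) i. card B = m}"
    using assms(2) by (auto simp: m_def)
  moreover have "int m - int (2 * M + 2) = j" "i - tri_int j \<le> m"
    using assms by (auto simp: m_def)
  ultimately show ?thesis
    using assms card_beta_sets_stable[of "i - tri_int j" m M] by (simp add: jtp_sets_with_card)
qed

lemma sum_jtp_sets_eq_theta_beta_nth:
  fixes x :: "'a::field"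
  assumes "i \<le> M"
  shows "(\<Sum>B\<in>jtp_sets (2 * M + 2) i. (-x) powi (int (card B) - int (2 * M + 2))) =
    (theta_fps M x * beta_fps M 1) $ i"
proof -
  define L where "L = 2 * M + 2"
  define R where "R = {-int M..int M+1}"
  have "finite (jtp_pairs M i)"
    by (rule finite_subset[of _ "Pow {0..M} \<times> Pow {1..M}"]) (auto simp: jtp_pairs_def)
  then have fin: "finite (jtp_sets L i)"
    using bij_betw_finite[OF bij_betw_jtp_set[OF assms]] by (simp add: L_def)
  have "tri_int (int (card B) - int L) \<le> i" if "B \<in> jtp_sets L i" for B
    using that tri_card_le_sum[of B] by (simp add: jtp_sets_def)
  then have range: "(\<lambda>B. int (card B) - int L) ` jtp_sets L i \<subseteq> R"
    using assms tri_int_le_imp_range by (fastforce simp: R_def)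
  have "(\<Sum>B\<in>jtp_sets L i. (-x) powi (int (card B) - int L)) =
      (\<Sum>j\<in>R. \<Sum>B\<in>{B \<in> jtp_sets L i. int (card B) - int L = j}. (-x) powi j)"
    by (subst sum.group[symmetric, OF fin _ range]) (auto simp: R_def intro!: sum.cong)
  also have "\<dots> = (theta_fps M x * beta_fps M 1) $ i"
    unfolding theta_fps_mult_beta_fps_nth R_def
  proof (intro sum.cong refl)
    fix j assume "j \<in> {-int M..int M+1}"
    then show "(\<Sum>B\<in>{B \<in> jtp_sets L i. int (card B) - int L = j}. (-x) powi j) =
        (-x) powi j * (if tri_int j \<le> i then of_nat (card (beta_sets M (i - tri_int j))) else 0)"
      using card_jtp_sets_charge[OF assms, of j] by (simp add: L_def mult.commute)
  qed
  finally show ?thesis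
    by (simp add: L_def)
qed

theorem jacobi_triple_product_nth:
  fixes x y :: "'a::field"
  assumes "x * y = 1" "i \<le> M"
  shows "(fps_const (1 - x) *
      (\<Prod>k\<in>{1..M}. (1 - fps_X ^ k) * (1 - fps_const x * fps_X ^ k) * (1 - fps_const y * fps_X ^ k))) $ i =
    theta_fps M x $ i"
proof -
  let ?Q = "\<Prod>k\<in>{1..M}. 1 - fps_X ^ k :: 'a fps"
  let ?U = "(\<Prod>k\<in>{0..M}. 1 - fps_const x * fps_X ^ k) * (\<Prod>k\<in>{1..M}. 1 - fps_const y * fps_X ^ k)"
  have "(\<Prod>k\<in>{0..M}. 1 - fps_const x * fps_X ^ k) =
      fps_const (1 - x) * (\<Prod>k\<in>{1..M}. 1 - fps_const x * fps_X ^ k)"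
  proof -
    have "{0..M} = insert 0 {1..M}"
      by auto
    then show ?thesis
      by (simp add: fps_const_sub[symmetric])
  qed
  then have "?U * ?Q = fps_const (1 - x) *
      (\<Prod>k\<in>{1..M}. (1 - fps_X ^ k) * (1 - fps_const x * fps_X ^ k) * (1 - fps_const y * fps_X ^ k))"
    by (simp add: prod.distrib ac_simps)
  moreover have "beta_fps M 1 * ?Q = 1"
    using geom_fps_inverse[of _ "1::'a"]
    by (simp add: beta_fps_eq_prod prod.distrib[symmetric] mult.commute)
  moreover have "(?U * ?Q) $ i = (theta_fps M x * beta_fps M 1 * ?Q) $ i"
  proof (rule fps_mult_nth_cong)
    fix t assume "t \<le> i"
    then show "?U $ t = (theta_fps M x * beta_fps M 1) $ t"
      using assms jtp_prod_nth_eq_sum_jtp_sets[OF assms(1), of t M "2 * M + 2"]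
        sum_jtp_sets_eq_theta_beta_nth[of t M x] by simp
  qed
  ultimately show ?thesis
    by (simp add: mult.assoc)
qed

section \<open>Vanishing at fifth roots of unity\<close>

lemma sum_fifth_roots_eq_0:
  fixes z :: "'a::idom"
  assumes "z ^ 5 = 1" "z \<noteq> 1"
  shows "1 + z + z^2 + z^3 + z^4 = 0"
proof -
  have "(z - 1) * (1 + z + z^2 + z^3 + z^4) = z^5 - 1"
    by (simp add: algebra_simps eval_nat_numeral)
  then show ?thesis
    using assms by simp
qed

lemma prod_one_minus_fifth_roots:
  fixes z Y :: "'a::comm_ring_1"
  assumes "1 + z + z^2 + z^3 + z^4 = 0"
  shows "(1 - Y) * (1 - z * Y) * (1 - z^2 * Y) * (1 - z^3 * Y) * (1 - z^4 * Y) = 1 - Y^5"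
proof -
  have z5: "z^5 = 1"
  proof -
    have "(z - 1) * (1 + z + z^2 + z^3 + z^4) = z^5 - 1"
      by (simp add: algebra_simps eval_nat_numeral)
    then show ?thesis
      using assms by simp
  qed
  define p q where "p = z + z^4" and "q = z^2 + z^3"
  have "p + q = -1"
    using assms by (simp add: p_def q_def algebra_simps eq_neg_iff_add_eq_0)
  moreover have "p * q = -1"
  proof -
    have "p * q = z^3 + z^4 + z^5 * z + z^5 * z^2"
      by (simp add: p_def q_def algebra_simps eval_nat_numeral)
    then show ?thesis
      using assms z5 by (simp add: algebra_simps eq_neg_iff_add_eq_0)
  qed
  moreover have "(1 - Y) * (1 - z * Y) * (1 - z^2 * Y) * (1 - z^3 * Y) * (1 - z^4 * Y) =
      (1 - Y) * (1 - p * Y + z^5 * Y^2) * (1 - q * Y + z^5 * Y^2)"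
    by (simp add: p_def q_def algebra_simps eval_nat_numeral)
  moreover have "(1 - Y) * (1 - p * Y + Y^2) * (1 - q * Y + Y^2) =
      1 - Y^5 + (p + q + 1) * (Y^4 - Y) + (p + q + 1 + p * q + 1) * (Y^2 - Y^3)"
    by (simp add: algebra_simps eval_nat_numeral)
  ultimately show ?thesis
    using z5 by simp
qed

lemma tri_int_mod_5:
  assumes "j mod 5 \<noteq> 3"
  shows "tri_int j mod 5 \<in> {0, 1}"
proof -
  define r where "r = j mod 5"
  have j: "j = 5 * (j div 5) + r"
    by (simp add: r_def)
  have "2 * int (tri_int j) = 5 * (5 * (j div 5) * (j div 5) + 2 * (j div 5) * r - j div 5) + r * (r - 1)"
    by (subst two_tri_int_int, subst (1 2) j) (simp add: algebra_simps)
  moreover have "r \<in> {0, 1, 2, 4}"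
    using assms by (auto simp: r_def)
  then have "r * (r - 1) \<in> {0, 2, 12}"
    by auto
  moreover have "T mod 5 \<in> {0, 1}" if "2 * T = 5 * Q + c" "c \<in> {0, 2, 12}" for T Q c :: int
    using that by auto presburger+
  ultimately have "int (tri_int j) mod 5 \<in> {0, 1}"
    by blast
  then have "int (tri_int j mod 5) \<in> {0, 1}"
    by (simp add: zmod_int)
  then show ?thesis
    by auto
qed

lemma theta_fps_nth: "theta_fps M x $ n = (\<Sum>j\<in>{j\<in>{-int M..int M+1}. tri_int j = n}. (-x) powi j)"
proof -
  have "theta_fps M x $ n = (\<Sum>j\<in>{-int M..int M+1}. if tri_int j = n then (-x) powi j else 0)"
    unfolding theta_fps_def fps_sum_nth by (intro sum.cong) auto
  then show ?thesis
    by (simp only: sum.inter_filter[OF finite_atLeastAtMost_int])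
qed

lemma power_int_reflect_fifth_root:
  fixes z :: "'a::field"
  assumes "z ^ 5 = 1" "j mod 5 = 3"
  shows "(- (z^2)) powi (1 - j) = - ((- (z^2)) powi j)"
proof -
  obtain k where k: "j = 5 * k + 3"
    using assms(2) by (metis mod_div_mult_eq mult.commute add.commute)
  have "z \<noteq> 0"
    using assms(1) by auto
  have "(z^2) powi (1 - 2 * j) = z powi (2 * (1 - 2 * j))"
    by (simp add: power_int_power)
  also have "2 * (1 - 2 * j) = int 5 * (- 4 * k - 2)"
    using k by simp
  also have "z powi (int 5 * (- 4 * k - 2)) = 1"
    using assms(1) power_int_power[of z 5 "- 4 * k - 2"] by simp
  finally have "(z^2) powi (1 - 2 * j) = 1" .
  then have "(z^2) powi (1 - j) = (z^2) powi j"
    using \<open>z \<noteq> 0\<close> power_int_add[of "z^2" j "1 - 2 * j"] by simp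
  then show ?thesis
    by (simp add: power_int_minus_left)
qed

text \<open>The terms \<open>j\<close> and \<open>1 - j\<close> carry the same power of \<open>q\<close>; for the exponents in question
  \<open>j \<equiv> 3 (mod 5)\<close>, so these terms cancel.\<close>
lemma theta_fps_fifth_root_nth_eq_0:
  fixes z :: "'a::field_char_0"
  assumes "z ^ 5 = 1" "n mod 5 \<in> {2, 3, 4}"
  shows "theta_fps M (z^2) $ n = 0"
proof -
  define S where "S = {j\<in>{-int M..int M+1}. tri_int j = n}"
  have "tri_int (1 - j) = tri_int j" for j
    by (simp add: tri_int_def algebra_simps)
  then have bij: "bij_betw (\<lambda>j. 1 - j) S S"
    by (intro bij_betw_byWitness[where f' = "\<lambda>j. 1 - j"]) (auto simp: S_def)
  have "j mod 5 = 3" if "j \<in> S" for j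
  proof (rule ccontr)
    assume "j mod 5 \<noteq> 3"
    then have "n mod 5 \<in> {0, 1}"
      using tri_int_mod_5[of j] that by (simp add: S_def)
    then show False
      using assms(2) by auto
  qed
  then have "(\<Sum>j\<in>S. (- (z^2)) powi j) = - (\<Sum>j\<in>S. (- (z^2)) powi j)"
    using sum.reindex_bij_betw[OF bij, of "\<lambda>j. (- (z^2)) powi j"] power_int_reflect_fifth_root[OF assms(1)]
    by (simp add: sum_negf)
  then show ?thesis
    by (simp add: theta_fps_nth S_def)
qed

lemma jacobi_fifth_root_nth_eq_0:
  fixes z :: "'a::field_char_0"
  assumes "z ^ 5 = 1" "z \<noteq> 1" "n \<le> M" "n mod 5 \<in> {2, 3, 4}"
  shows "(\<Prod>k\<in>{1..M}. (1 - fps_X ^ k) * (1 - fps_const (z^2) * fps_X ^ k) *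
      (1 - fps_const (z^3) * fps_X ^ k)) $ n = 0"
proof -
  have "z^2 * z^3 = 1"
    using assms(1) by (simp flip: power_add)
  then have "(1 - z^2) * (\<Prod>k\<in>{1..M}. (1 - fps_X ^ k) * (1 - fps_const (z^2) * fps_X ^ k) *
      (1 - fps_const (z^3) * fps_X ^ k)) $ n = 0"
    using jacobi_triple_product_nth[of "z^2" "z^3" n M] theta_fps_fifth_root_nth_eq_0[OF assms(1,4)] assms(3)
    by simp
  moreover have "z^2 \<noteq> 1"
  proof
    assume "z^2 = 1"
    moreover have "z^5 = z * (z^2)^2"
      by (simp add: algebra_simps eval_nat_numeral)
    ultimately have "z^5 = z"
      by simp
    then show False
      using assms(1,2) by simp
  qed
  ultimately show ?thesis
    by simp
qed

lemma fps_mult_nth_eq_0_if_residue: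
  fixes A B :: "'a::comm_semiring_1 fps"
  assumes "\<And>t. t \<le> n \<Longrightarrow> t mod d = n mod d \<Longrightarrow> A $ t = 0" "\<And>t. \<not> d dvd t \<Longrightarrow> B $ t = 0"
  shows "(A * B) $ n = 0"
  unfolding fps_mult_nth
proof (rule sum.neutral, rule ballI)
  fix t assume t: "t \<in> {0..n}"
  show "A $ t * B $ (n - t) = 0"
  proof (cases "d dvd (n - t)")
    case True
    then have "A $ t = 0"
      using t assms(1) mod_eq_dvd_iff_nat[of t n d] by simp
    then show ?thesis
      by simp
  qed (simp add: assms(2))
qed

lemma prod_geom_fps_multiple_nth_eq_0:
  assumes "\<not> d dvd n"
  shows "(\<Prod>k\<in>{1..M}. geom_fps (d * k) z) $ n = 0"
  using assms
proof (induction M arbitrary: n)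
  case 0
  then show ?case
    by (cases n) simp_all
next
  case (Suc M)
  have "{1..Suc M} = insert (Suc M) {1..M}"
    by auto
  then have "(\<Prod>k\<in>{1..Suc M}. geom_fps (d * k) z) =
      geom_fps (d * Suc M) z * (\<Prod>k\<in>{1..M}. geom_fps (d * k) z)"
    by simp
  also have "\<dots> $ n = 0"
  proof (rule fps_mult_nth_eq_0_if_residue[of n d])
    show "geom_fps (d * Suc M) z $ t = 0" if "t mod d = n mod d" for t
    proof -
      have "\<not> d dvd t"
        using that Suc.prems by (metis dvd_eq_mod_eq_0)
      then show ?thesis
        by (auto simp: geom_fps_def dest: dvd_mult_left)
    qed
  qed (use Suc in auto)
  finally show ?case .
qed

text \<open>Since \<open>(1 - Y)(1 - z Y)(1 - z^2 Y)(1 - z^3 Y)(1 - z^4 Y) = 1 - Y^5\<close>, the product of the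
  \<open>1/((1 - z q^k)(1 - z^4 q^k))\<close> is the Jacobi product at \<open>x = z^2\<close> times a series in \<open>q^5\<close>.\<close>
lemma beta_fps_mult_fifth_root_eq:
  fixes z :: "'a::comm_ring_1"
  assumes "1 + z + z^2 + z^3 + z^4 = 0"
  shows "beta_fps M z * beta_fps M (z^4) =
    (\<Prod>k\<in>{1..M}. (1 - fps_X ^ k) * (1 - fps_const (z^2) * fps_X ^ k) * (1 - fps_const (z^3) * fps_X ^ k)) *
    (\<Prod>k\<in>{1..M}. geom_fps (5 * k) 1)"
    (is "?H = ?J * ?W")
proof -
  define E where "E = (\<Prod>k\<in>{1..M}. (1 - fps_const z * fps_X ^ k) * (1 - fps_const (z^4) * fps_X ^ k))"
  have "?H * E = (\<Prod>k\<in>{1..M}. ((1 - fps_const z * fps_X ^ k) * geom_fps k z) *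
      ((1 - fps_const (z^4) * fps_X ^ k) * geom_fps k (z^4)))"
    by (simp add: E_def beta_fps_eq_prod prod.distrib[symmetric] ac_simps)
  then have HE: "?H * E = 1"
    by (simp add: geom_fps_inverse)
  have roots: "1 + fps_const z + fps_const z ^ 2 + fps_const z ^ 3 + fps_const z ^ 4 = 0"
    using assms by (metis fps_const_add fps_const_power fps_const_1_eq_1 fps_const_0_eq_0)
  have "E * ?J * ?W = (\<Prod>k\<in>{1..M}. ((1 - fps_X ^ k) * (1 - fps_const z * fps_X ^ k) *
      (1 - fps_const z ^ 2 * fps_X ^ k) * (1 - fps_const z ^ 3 * fps_X ^ k) *
      (1 - fps_const z ^ 4 * fps_X ^ k)) * geom_fps (5 * k) 1)"
    by (simp add: E_def prod.distrib[symmetric] fps_const_power ac_simps)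
  also have "\<dots> = (\<Prod>k\<in>{1..M}. (1 - fps_const 1 * fps_X ^ (5 * k)) * geom_fps (5 * k) 1)"
  proof (intro prod.cong refl)
    fix k
    have "(1 - fps_X ^ k) * (1 - fps_const z * fps_X ^ k) * (1 - fps_const z ^ 2 * fps_X ^ k) *
        (1 - fps_const z ^ 3 * fps_X ^ k) * (1 - fps_const z ^ 4 * fps_X ^ k) = 1 - (fps_X ^ k) ^ 5"
      by (rule prod_one_minus_fifth_roots[OF roots])
    then show "(1 - fps_X ^ k) * (1 - fps_const z * fps_X ^ k) * (1 - fps_const z ^ 2 * fps_X ^ k) *
        (1 - fps_const z ^ 3 * fps_X ^ k) * (1 - fps_const z ^ 4 * fps_X ^ k) * geom_fps (5 * k) 1 =
        (1 - fps_const 1 * fps_X ^ (5 * k)) * geom_fps (5 * k) (1::'a)"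
      by (simp add: power_mult[symmetric] mult.commute)
  qed
  also have "\<dots> = 1"
    by (rule prod.neutral) (use geom_fps_inverse[of _ "1::'a"] in simp)
  finally have "E * ?J * ?W = 1" .
  then have "?H = ?H * E * (?J * ?W)"
    by (simp add: mult.assoc)
  then show ?thesis
    using HE by simp
qed

lemma beta_fps_mult_nth_stable:
  assumes "n \<le> m" "n \<le> m'"
  shows "(beta_fps m z * beta_fps m' z') $ n = (beta_fps n z * beta_fps n z') $ n"
proof -
  have "(beta_fps m z * beta_fps m' z') $ n = (beta_fps n z * beta_fps m' z') $ n"
  proof (rule fps_mult_nth_cong)
    show "beta_fps m z $ i = beta_fps n z $ i" if "i \<le> n" for i
      using that assms(1) by (intro beta_fps_nth_stable) auto
  qed
  also have "\<dots> = (beta_fps m' z' * beta_fps n z) $ n"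
    by (simp only: mult.commute)
  also have "\<dots> = (beta_fps n z' * beta_fps n z) $ n"
  proof (rule fps_mult_nth_cong)
    show "beta_fps m' z' $ i = beta_fps n z' $ i" if "i \<le> n" for i
      using that assms(2) by (intro beta_fps_nth_stable) auto
  qed
  finally show ?thesis
    by (simp only: mult.commute)
qed

theorem beta_fps_mult_fifth_root_nth_eq_0:
  fixes z :: "'a::field_char_0"
  assumes "z ^ 5 = 1" "z \<noteq> 1" "n \<le> m" "n \<le> m'" "n mod 5 \<in> {2, 3, 4}"
  shows "(beta_fps m z * beta_fps m' (z^4)) $ n = 0"
proof -
  have "(beta_fps m z * beta_fps m' (z^4)) $ n = (beta_fps n z * beta_fps n (z^4)) $ n"
    by (rule beta_fps_mult_nth_stable[OF assms(3,4)])
  also have "beta_fps n z * beta_fps n (z^4) =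
      (\<Prod>k\<in>{1..n}. (1 - fps_X ^ k) * (1 - fps_const (z^2) * fps_X ^ k) * (1 - fps_const (z^3) * fps_X ^ k)) *
      (\<Prod>k\<in>{1..n}. geom_fps (5 * k) 1)"
    by (rule beta_fps_mult_fifth_root_eq[OF sum_fifth_roots_eq_0[OF assms(1,2)]])
  also have "\<dots> $ n = 0"
  proof (rule fps_mult_nth_eq_0_if_residue[of n 5])
    show "(\<Prod>k\<in>{1..n}. (1 - fps_X ^ k) * (1 - fps_const (z^2) * fps_X ^ k) *
        (1 - fps_const (z^3) * fps_X ^ k)) $ t = 0" if "t \<le> n" "t mod 5 = n mod 5" for t
      using that assms by (intro jacobi_fifth_root_nth_eq_0) simp_all
    show "(\<Prod>k\<in>{1..n}. geom_fps (5 * k) 1) $ t = (0::'a)" if "\<not> 5 dvd t" for t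
      using that by (rule prod_geom_fps_multiple_nth_eq_0)
  qed
  finally show ?thesis .
qed

section \<open>Partitions as beta-sets\<close>

lemma length_le_if_partitions:
  assumes "xs \<in> partitions N"
  shows "length xs \<le> N"
proof -
  have "0 \<notin> set xs" "sum_list xs = N"
    using assms by (auto simp: partitions_def)
  then show ?thesis
  proof (induction xs arbitrary: N)
    case (Cons x xs)
    then show ?case by fastforce
  qed simp
qed

definition pad_zeros :: "nat \<Rightarrow> nat list \<Rightarrow> nat list" where
  "pad_zeros L xs = xs @ replicate (L - length xs) 0"

lemma length_pad_zeros: "length xs \<le> L \<Longrightarrow> length (pad_zeros L xs) = L"
  by (simp add: pad_zeros_def)

lemma nth_pad_zeros: "length xs \<le> L \<Longrightarrow> i < L \<Longrightarrow> pad_zeros L xs ! i = part_at xs (Suc i)"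
  by (auto simp: pad_zeros_def part_at_def nth_append)

lemma sorted_pad_zeros:
  assumes "sorted_wrt (\<ge>) xs"
  shows "sorted_wrt (\<ge>) (pad_zeros L xs)"
proof -
  have "sorted_wrt (\<ge>) (replicate n (0::nat))" for n
    by (induction n) auto
  then show ?thesis
    using assms by (auto simp: pad_zeros_def sorted_wrt_append)
qed

lemma filter_pad_zeros: "0 \<notin> set xs \<Longrightarrow> filter (\<lambda>x. 0 < x) (pad_zeros L xs) = xs"
  by (induction xs) (auto simp: pad_zeros_def)

lemma pad_zeros_filter:
  fixes ys :: "nat list"
  assumes "sorted_wrt (\<ge>) ys"
  shows "pad_zeros (length ys) (filter (\<lambda>x. 0 < x) ys) = ys"
  using assms
proof (induction ys)
  case (Cons y ys)
  show ?case
  proof (cases "y = 0")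
    case True
    then have "\<forall>x\<in>set ys. x = 0"
      using Cons.prems by auto
    then show ?thesis
      using True by (simp add: pad_zeros_def filter_empty_conv replicate_length_same)
  next
    case False
    then show ?thesis
      using Cons by (simp add: pad_zeros_def Suc_diff_le length_filter_le)
  qed
qed (simp add: pad_zeros_def)

lemma sum_list_pad_zeros: "sum_list (pad_zeros L xs) = sum_list xs"
  by (simp add: pad_zeros_def)

definition beta_list :: "nat \<Rightarrow> nat list \<Rightarrow> nat list" where
  "beta_list L xs = map (\<lambda>i. pad_zeros L xs ! i + (L - 1 - i)) [0..<L]"

lemma beta_list_strictly_decreasing:
  assumes "sorted_wrt (\<ge>) xs" "length xs \<le> L"
  shows "sorted_wrt (>) (beta_list L xs)"
  using sorted_pad_zeros[OF assms(1), of L] length_pad_zeros[OF assms(2)]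
  by (fastforce simp: sorted_wrt_iff_nth_less beta_list_def)

lemma beta_list_eq_iff:
  assumes "length xs \<le> L" "length ys \<le> L"
  shows "beta_list L xs = beta_list L ys \<longleftrightarrow> pad_zeros L xs = pad_zeros L ys"
  using assms by (auto simp: beta_list_def length_pad_zeros list_eq_iff_nth_eq)

definition beta_fin :: "nat \<Rightarrow> nat list \<Rightarrow> nat set" where
  "beta_fin L xs = set (beta_list L xs)"

lemma beta_fin_eq_image:
  assumes "length xs \<le> L"
  shows "beta_fin L xs = (\<lambda>j. part_at xs j + L - j) ` {1..L}"
proof -
  have "beta_fin L xs = (\<lambda>i. part_at xs (Suc i) + L - Suc i) ` {0..<L}"
    using assms by (auto simp: beta_fin_def beta_list_def nth_pad_zeros)
  also have "\<dots> = (\<lambda>j. part_at xs j + L - j) ` (Suc ` {0..<L})"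
    by (simp only: image_image)
  also have "Suc ` {0..<L} = {1..L}"
    by (simp add: image_Suc_atLeastLessThan atLeastLessThanSuc_atLeastAtMost)
  finally show ?thesis .
qed

lemma sum_beta_list:
  assumes "length xs \<le> L"
  shows "sum_list (beta_list L xs) = sum_list xs + tri L"
proof -
  have "sum_list (beta_list L xs) = (\<Sum>i<L. pad_zeros L xs ! i + (L - 1 - i))"
    by (simp only: beta_list_def sum_list_sum_nth length_map length_upt nth_map_upt atLeast0LessThan)
      simp
  also have "\<dots> = (\<Sum>i<L. pad_zeros L xs ! i) + (\<Sum>i<L. L - 1 - i)"
    by (rule sum.distrib)
  also have "(\<Sum>i<L. pad_zeros L xs ! i) = sum_list xs"
    using length_pad_zeros[OF assms] sum_list_pad_zeros[of L xs]
    by (simp add: sum_list_sum_nth atLeast0LessThan)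
  finally show ?thesis
    by (simp add: sum_lessThan_reverse_eq_tri)
qed

lemma beta_fin_in_beta_sets:
  assumes "xs \<in> partitions N" "length xs \<le> L"
  shows "beta_fin L xs \<in> beta_sets L N"
proof -
  have "sorted_wrt (>) (beta_list L xs)"
    using assms by (intro beta_list_strictly_decreasing) (auto simp: partitions_def)
  then have "distinct (beta_list L xs)"
    by (metis sorted_wrt_rev strict_sorted_iff distinct_rev)
  moreover have "length (beta_list L xs) = L"
    by (simp add: beta_list_def)
  moreover have "sum_list xs = N"
    using assms(1) by (simp add: partitions_def)
  ultimately show ?thesis
    using sum_beta_list[OF assms(2)]
    by (simp add: beta_sets_def beta_fin_def distinct_card distinct_sum_list_conv_Sum)
qed

lemma strictly_decreasing_list_eqI:
  fixes xs ys :: "'a::linorder list"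
  assumes "sorted_wrt (>) xs" "sorted_wrt (>) ys" "set xs = set ys"
  shows "xs = ys"
proof -
  have "sorted_wrt (<) (rev xs)" "sorted_wrt (<) (rev ys)"
    using assms(1,2) by (simp_all add: sorted_wrt_rev)
  then have "rev xs = rev ys"
    using assms(3) by (intro sorted_distinct_set_unique) (simp_all add: strict_sorted_iff)
  then show ?thesis
    by simp
qed

lemma beta_fin_inj:
  assumes "xs \<in> partitions N" "ys \<in> partitions N'" "length xs \<le> L" "length ys \<le> L"
    and "beta_fin L xs = beta_fin L ys"
  shows "xs = ys"
proof -
  have "beta_list L xs = beta_list L ys"
    using assms by (intro strictly_decreasing_list_eqI beta_list_strictly_decreasing)
      (auto simp: partitions_def beta_fin_def)
  then have "pad_zeros L xs = pad_zeros L ys"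
    using assms(3,4) beta_list_eq_iff by blast
  moreover have "0 \<notin> set xs" "0 \<notin> set ys"
    using assms(1,2) by (auto simp: partitions_def)
  ultimately show ?thesis
    by (metis filter_pad_zeros)
qed

lemma strictly_decreasing_nth_gap:
  assumes "sorted_wrt (>) zs" "i \<le> j" "j < length zs"
  shows "zs ! j + (j - i) \<le> (zs ! i :: nat)"
  using assms(2,3)
proof (induction j rule: dec_induct)
  case (step j)
  then have "zs ! Suc j < zs ! j"
    using assms(1) by (simp add: sorted_wrt_iff_nth_less)
  then show ?case
    using step by simp
qed simp

lemma strictly_decreasing_nth_lower:
  assumes "sorted_wrt (>) bs" "i < length bs"
  shows "length bs - Suc i \<le> (bs ! i :: nat)"
proof -
  have "bs ! (length bs - 1) + (length bs - 1 - i) \<le> bs ! i"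
    using assms by (intro strictly_decreasing_nth_gap) auto
  then show ?thesis
    by simp
qed

lemma sorted_minus_staircase:
  assumes "sorted_wrt (>) bs"
  shows "sorted_wrt (\<ge>) (map (\<lambda>i. bs ! i - (length bs - Suc i)) [0..<length bs])"
  unfolding sorted_wrt_iff_nth_less
proof (intro allI impI)
  fix i j assume ij: "i < j" "j < length (map (\<lambda>i. bs ! i - (length bs - Suc i)) [0..<length bs])"
  then have "bs ! j + (j - i) \<le> bs ! i"
    by (intro strictly_decreasing_nth_gap[OF assms]) auto
  then show "map (\<lambda>i. bs ! i - (length bs - Suc i)) [0..<length bs] ! j
      \<le> map (\<lambda>i. bs ! i - (length bs - Suc i)) [0..<length bs] ! i"
    using ij strictly_decreasing_nth_lower[OF assms, of i] strictly_decreasing_nth_lower[OF assms, of j]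
    by simp
qed

lemma beta_list_surj:
  fixes bs :: "nat list"
  assumes "sorted_wrt (>) bs"
  obtains xs where "sorted_wrt (\<ge>) xs" "0 \<notin> set xs" "length xs \<le> length bs"
    "beta_list (length bs) xs = bs"
proof -
  define L where "L = length bs"
  define ps where "ps = map (\<lambda>i. bs ! i - (L - Suc i)) [0..<L]"
  have ps_sorted: "sorted_wrt (\<ge>) ps"
    using sorted_minus_staircase[OF assms] by (simp add: ps_def L_def)
  define xs where "xs = filter (\<lambda>x. 0 < x) ps"
  have pad: "pad_zeros L xs = ps"
    using pad_zeros_filter[OF ps_sorted] by (simp add: xs_def ps_def)
  have "beta_list L xs = bs"
  proof (rule nth_equalityI)
    show "length (beta_list L xs) = length bs"
      by (simp add: beta_list_def L_def)
    fix i assume "i < length (beta_list L xs)"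
    then have "i < L"
      by (simp add: beta_list_def)
    then have "beta_list L xs ! i = ps ! i + (L - Suc i)"
      by (simp add: beta_list_def pad)
    then show "beta_list L xs ! i = bs ! i"
      using strictly_decreasing_nth_lower[OF assms, of i] \<open>i < L\<close> by (simp add: ps_def L_def)
  qed
  moreover have "length xs \<le> L"
    using length_filter_le[of _ ps] by (simp add: xs_def ps_def)
  moreover have "sorted_wrt (\<ge>) xs" "0 \<notin> set xs"
    using ps_sorted by (simp_all add: xs_def sorted_wrt_filter)
  ultimately show thesis
    by (intro that) (simp_all add: L_def)
qed

lemma beta_fin_surj:
  assumes "B \<in> beta_sets L N"
  shows "\<exists>xs\<in>partitions N. length xs \<le> L \<and> beta_fin L xs = B"
proof -
  define bs where "bs = rev (sorted_list_of_set B)"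
  have "finite B"
    using assms by (simp add: beta_sets_def)
  then have bs: "sorted_wrt (>) bs" "distinct bs" "set bs = B" "length bs = L"
    using assms by (simp_all add: bs_def sorted_wrt_rev strict_sorted_list_of_set beta_sets_def)
  obtain xs where xs: "sorted_wrt (\<ge>) xs" "0 \<notin> set xs" "length xs \<le> L" "beta_list L xs = bs"
    using beta_list_surj[OF bs(1)] bs(4) by metis
  have "sum_list xs + tri L = N + tri L"
    using assms bs sum_beta_list[OF xs(3)] xs(4) by (simp add: beta_sets_def distinct_sum_list_conv_Sum)
  then show ?thesis
    using xs bs(3) by (auto simp: partitions_def beta_fin_def)
qed

lemma bij_betw_beta_fin:
  assumes "N \<le> L"
  shows "bij_betw (beta_fin L) (partitions N) (beta_sets L N)"
proof -
  have len: "length xs \<le> L" if "xs \<in> partitions N" for xs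
    using length_le_if_partitions[OF that] assms by simp
  show ?thesis
    unfolding bij_betw_def
  proof
    show "inj_on (beta_fin L) (partitions N)"
      using beta_fin_inj len by (meson inj_onI)
    show "beta_fin L ` partitions N = beta_sets L N"
      using beta_fin_in_beta_sets len beta_fin_surj by blast
  qed
qed

lemma finite_partitions: "finite (partitions N)"
  using bij_betw_finite[OF bij_betw_beta_fin[of N N]] by simp

section \<open>The 2-quotient-rank and the srank\<close>

text \<open>The runners of a beta-set on the 2-abacus are beta-sets of the two components of the
  2-quotient.\<close>
definition runner :: "nat \<Rightarrow> nat set \<Rightarrow> nat set" where
  "runner c E = {b. 2 * b + c \<in> E}"

lemma finite_runner: "finite E \<Longrightarrow> finite (runner c E)"
  by (rule finite_subset[of _ "(\<lambda>x. (x - c) div 2) ` E"]) (force simp: runner_def)+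

lemma beta_set_eq:
  assumes "length xs \<le> L"
  shows "beta_set xs = (\<lambda>b. int b - int L) ` beta_fin L xs \<union> {x. x < - int L}"
proof (intro set_eqI iffI)
  fix x assume "x \<in> beta_set xs"
  then obtain j where j: "j \<ge> 1" "x = int (part_at xs j) - int j"
    by (auto simp: beta_set_def)
  show "x \<in> (\<lambda>b. int b - int L) ` beta_fin L xs \<union> {x. x < - int L}"
  proof (cases "j \<le> L")
    case True
    then have "part_at xs j + L - j \<in> beta_fin L xs" "x = int (part_at xs j + L - j) - int L"
      using j assms by (auto simp: beta_fin_eq_image)
    then show ?thesis
      by blast
  qed (use j assms in \<open>auto simp: part_at_def\<close>)
next
  fix x assume x: "x \<in> (\<lambda>b. int b - int L) ` beta_fin L xs \<union> {x. x < - int L}"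
  show "x \<in> beta_set xs"
  proof (cases "x < - int L")
    case True
    then have "x = int (part_at xs (nat (- x))) - int (nat (- x))" "1 \<le> nat (- x)"
      using assms by (auto simp: part_at_def)
    then show ?thesis
      unfolding beta_set_def by blast
  next
    case False
    then obtain j where "j \<in> {1..L}" "x = int (part_at xs j + L - j) - int L"
      using x assms by (auto simp: beta_fin_eq_image)
    then have "j \<ge> 1" "x = int (part_at xs j) - int j"
      by auto
    then show ?thesis
      unfolding beta_set_def by blast
  qed
qed

lemma beta_sub_eq:
  assumes "length xs \<le> 2 * K" "c \<le> 1"
  shows "beta_sub 2 c xs = (\<lambda>b. int b - int K) ` runner c (beta_fin (2 * K) xs) \<union> {k. k < - int K}"
proof (intro set_eqI iffI)
  fix k assume "k \<in> beta_sub 2 c xs"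
  then have k: "2 * k + int c \<in> (\<lambda>b. int b - int (2 * K)) ` beta_fin (2 * K) xs \<union> {x. x < - int (2 * K)}"
    using beta_set_eq[OF assms(1)] by (simp add: beta_sub_def)
  show "k \<in> (\<lambda>b. int b - int K) ` runner c (beta_fin (2 * K) xs) \<union> {k. k < - int K}"
  proof (cases "k < - int K")
    case False
    then obtain b where b: "b \<in> beta_fin (2 * K) xs" "2 * k + int c = int b - int (2 * K)"
      using k by auto
    then have "2 * nat (k + int K) + c = b" "k = int (nat (k + int K)) - int K"
      using False by linarith+
    then show ?thesis
      using b(1) by (auto simp: runner_def intro!: image_eqI[where x = "nat (k + int K)"])
  qed simp
next
  fix k assume k: "k \<in> (\<lambda>b. int b - int K) ` runner c (beta_fin (2 * K) xs) \<union> {k. k < - int K}"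
  have "2 * k + int c \<in> (\<lambda>b. int b - int (2 * K)) ` beta_fin (2 * K) xs \<union> {x. x < - int (2 * K)}"
  proof (cases "k < - int K")
    case False
    then obtain b where "2 * b + c \<in> beta_fin (2 * K) xs" "k = int b - int K"
      using k by (auto simp: runner_def)
    then show ?thesis
      by (auto intro!: image_eqI[of _ _ "2 * b + c"])
  qed (use assms(2) in auto)
  then show "k \<in> beta_sub 2 c xs"
    using beta_set_eq[OF assms(1)] by (simp add: beta_sub_def)
qed

lemma gaps_below_shifted_eq:
  fixes A :: "nat set" and K :: nat
  assumes "finite A"
  defines "T \<equiv> (\<lambda>b. int b - int K) ` A \<union> {k. k < - int K}"
  shows "{g. g \<notin> T \<and> 0 < card {s \<in> T. g < s}} = (\<lambda>b. int b - int K) ` {b. b \<notin> A \<and> (\<exists>a\<in>A. b < a)}"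
proof -
  have pos: "0 < card {s \<in> T. g < s} \<longleftrightarrow> (\<exists>a\<in>A. g < int a - int K)" if "g \<notin> T" for g
  proof -
    have "{s \<in> T. g < s} = {s \<in> (\<lambda>b. int b - int K) ` A. g < s}"
      using that by (auto simp: T_def)
    then show ?thesis
      using assms by (auto simp: card_gt_0_iff)
  qed
  show ?thesis
  proof (intro set_eqI iffI)
    fix g assume g: "g \<in> {g. g \<notin> T \<and> 0 < card {s \<in> T. g < s}}"
    then obtain a where "a \<in> A" "g < int a - int K"
      using pos by blast
    moreover have geq: "g = int (nat (g + int K)) - int K"
      using g by (auto simp: T_def)
    moreover have "nat (g + int K) \<notin> A"
    proof
      assume "nat (g + int K) \<in> A"
      then have "g \<in> T"
        unfolding T_def by (subst geq) blast
      then show False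
        using g by simp
    qed
    moreover have "nat (g + int K) < a"
      using \<open>g < int a - int K\<close> geq by linarith
    ultimately show "g \<in> (\<lambda>b. int b - int K) ` {b. b \<notin> A \<and> (\<exists>a\<in>A. b < a)}"
      by (intro image_eqI[of g _ "nat (g + int K)"]) auto
  next
    fix g assume "g \<in> (\<lambda>b. int b - int K) ` {b. b \<notin> A \<and> (\<exists>a\<in>A. b < a)}"
    then obtain b a where "g = int b - int K" "b \<notin> A" "a \<in> A" "b < a"
      by auto
    moreover from this have "g \<notin> T"
      by (auto simp: T_def)
    ultimately show "g \<in> {g. g \<notin> T \<and> 0 < card {s \<in> T. g < s}}"
      using pos by auto
  qed
qed

lemma card_gaps_below_shifted:
  fixes A :: "nat set" and K :: nat
  assumes "finite A"
  shows "card {g. g \<notin> (\<lambda>b. int b - int K) ` A \<union> {k. k < - int K} \<and>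
      0 < card {s \<in> (\<lambda>b. int b - int K) ` A \<union> {k. k < - int K}. g < s}} = gaps A"
proof -
  have "inj_on (\<lambda>b. int b - int K) X" for X
    by (auto simp: inj_on_def)
  then show ?thesis
    unfolding gaps_below_shifted_eq[OF assms] using card_gaps[OF assms] by (simp add: card_image)
qed

lemma quotient_nu_eq_gaps:
  assumes "length xs \<le> 2 * K" "c \<le> 1"
  shows "quotient_nu 2 c xs = gaps (runner c (beta_fin (2 * K) xs))"
  unfolding quotient_nu_def beta_sub_eq[OF assms]
  by (rule card_gaps_below_shifted[OF finite_runner]) (simp add: beta_fin_def)

lemma two_quotient_rank_eq:
  assumes "length xs \<le> 2 * K"
  shows "two_quotient_rank xs =
    int (gaps (runner 0 (beta_fin (2 * K) xs))) - int (gaps (runner 1 (beta_fin (2 * K) xs)))"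
  using quotient_nu_eq_gaps[OF assms] by (simp add: two_quotient_rank_def)

definition alternating_sum :: "nat list \<Rightarrow> int" where
  "alternating_sum xs = (\<Sum>k<length xs. (-1) ^ k * int (xs ! k))"

lemma alternating_sum_Cons: "alternating_sum (x # xs) = int x - alternating_sum xs"
  by (simp add: alternating_sum_def sum.lessThan_Suc_shift sum_negf del: sum.lessThan_Suc)

lemma num_odd_conjugate:
  assumes "sorted_wrt (\<ge>) xs"
  shows "int (num_odd (conjugate xs)) = alternating_sum xs"
proof -
  define above where "above ys j = length (filter (\<lambda>x. j < x) ys)" for ys :: "nat list" and j
  define top where "top ys = (if ys = [] then 0 else hd ys)" for ys :: "nat list"
  have "num_odd (conjugate ys) = card {j. j < top ys \<and> odd (above ys j)}" for ys
    unfolding num_odd_def conjugate_def length_filter_conv_card above_def top_def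
    by (intro arg_cong[where f = card]) auto
  moreover have "int (card {j. j < top ys \<and> odd (above ys j)}) = alternating_sum ys"
    if "sorted_wrt (\<ge>) ys" for ys
    using that
  proof (induction ys)
    case (Cons x ys)
    have top: "top ys \<le> x"
      using Cons.prems by (cases ys) (auto simp: top_def)
    have "above ys j = 0" if "top ys \<le> j" for j
      using Cons.prems that by (cases ys) (auto simp: top_def above_def filter_empty_conv)
    then have "{j. j < top ys \<and> odd (above ys j)} = {j. j < x \<and> odd (above ys j)}"
      using top by (auto simp: not_less) (metis leI odd_pos less_irrefl)
    moreover have "{j. j < top (x # ys) \<and> odd (above (x # ys) j)} = {..<x} - {j. j < x \<and> odd (above ys j)}"
      by (auto simp: top_def above_def)
    ultimately have "card {j. j < top (x # ys) \<and> odd (above (x # ys) j)} =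
        x - card {j. j < top ys \<and> odd (above ys j)}"
      using finite_subset[of "{j. j < x \<and> odd (above ys j)}" "{..<x}"]
      by (simp add: card_Diff_subset subset_iff)
    moreover have "card {j. j < top ys \<and> odd (above ys j)} \<le> x"
      using card_mono[of "{..<x}" "{j. j < top ys \<and> odd (above ys j)}"] top by force
    ultimately show ?case
      using Cons by (simp add: alternating_sum_Cons)
  qed (simp add: top_def alternating_sum_def)
  ultimately show ?thesis
    using assms by simp
qed

lemma alternating_sum_pad_zeros:
  assumes "length xs \<le> L"
  shows "alternating_sum xs = (\<Sum>k<L. (-1) ^ k * int (pad_zeros L xs ! k))"
proof -
  have "(\<Sum>k<L. (-1) ^ k * int (pad_zeros L xs ! k)) =
      (\<Sum>k<length xs. (-1) ^ k * int (pad_zeros L xs ! k))"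
    using assms by (intro sum.mono_neutral_right) (auto simp: pad_zeros_def nth_append)
  then show ?thesis
    by (simp add: alternating_sum_def pad_zeros_def nth_append)
qed

lemma int_card_eq_sum_of_bool:
  fixes L :: nat
  shows "int (card {k. k < L \<and> P k}) = (\<Sum>k<L. of_bool (P k))"
proof -
  have "{k. k < L \<and> P k} = {..<L} \<inter> {k. P k}"
    by auto
  then show ?thesis
    by simp
qed

lemma num_odd_pad_zeros:
  assumes "length xs \<le> L"
  shows "num_odd xs = card {k. k < L \<and> odd (pad_zeros L xs ! k)}"
proof -
  have "num_odd xs = length (filter odd (pad_zeros L xs))"
    by (simp add: num_odd_def pad_zeros_def)
  then show ?thesis
    using length_pad_zeros[OF assms] by (simp add: length_filter_conv_card)
qed

lemma card_runner_0_beta_fin: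
  assumes "xs \<in> partitions N" "length xs \<le> L"
  shows "card (runner 0 (beta_fin L xs)) = card {k. k < L \<and> even (pad_zeros L xs ! k + (L - Suc k))}"
proof -
  have "sorted_wrt (>) (beta_list L xs)"
    using assms by (intro beta_list_strictly_decreasing) (auto simp: partitions_def)
  then have "distinct (beta_list L xs)"
    by (metis sorted_wrt_rev strict_sorted_iff distinct_rev)
  have "(\<lambda>b. 2 * b) ` runner 0 (beta_fin L xs) = {x. even x} \<inter> set (beta_list L xs)"
    by (auto simp: runner_def beta_fin_def)
  moreover have "inj_on (\<lambda>b. 2 * b) (runner 0 (beta_fin L xs))"
    by (auto simp: inj_on_def)
  ultimately have "card (runner 0 (beta_fin L xs)) = length (filter even (beta_list L xs))"
    using card_image distinct_length_filter[OF \<open>distinct (beta_list L xs)\<close>] by (metis Int_commute)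
  also have "\<dots> = card {k. k < L \<and> even (pad_zeros L xs ! k + (L - Suc k))}"
    unfolding length_filter_conv_card by (intro arg_cong[where f = card]) (auto simp: beta_list_def)
  finally show ?thesis .
qed

text \<open>The contribution of a single row \<open>k\<close> (with part \<open>a\<close>) to the difference of the two sides
  of \<open>srank_mod_4\<close>.\<close>
lemma four_dvd_srank_term:
  fixes a k L :: nat
  assumes "even L" "k < L"
  shows "(4::int) dvd (of_bool (odd a) - (-1) ^ k * int a - int a
           + of_bool (even (a + (L - Suc k))) - of_bool (odd k))"
proof -
  have par: "even (a + (L - Suc k)) \<longleftrightarrow> odd (a + k)"
    using assms by (metis Suc_diff_Suc add.commute add_Suc_right diff_Suc_1 even_Suc
        le_add_diff_inverse2 less_imp_le_nat even_add)
  show ?thesis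
  proof (cases "even k")
    case True
    then show ?thesis
      using par by (cases "even a") (auto elim!: evenE oddE)
  next
    case False
    then show ?thesis
      using par by auto
  qed
qed

lemma srank_mod_4:
  assumes "xs \<in> partitions N" "length xs \<le> 2 * K"
  shows "srank xs mod 4 = (int N - (int (card (runner 0 (beta_fin (2 * K) xs))) - int K)) mod 4"
proof -
  define L where "L = 2 * K"
  define a where "a k = pad_zeros L xs ! k" for k
  have len: "length xs \<le> L"
    using assms(2) by (simp add: L_def)
  have "N = (\<Sum>k<L. a k)"
    using assms(1) length_pad_zeros[OF len] sum_list_pad_zeros[of L xs]
    by (simp add: a_def partitions_def sum_list_sum_nth atLeast0LessThan)
  then have "int N = (\<Sum>k<L. int (a k))"
    by simp
  moreover have "int K = (\<Sum>k<L. of_bool (odd k))"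
  proof -
    have "{k. k < L \<and> odd k} = (\<lambda>i. 2 * i + 1) ` {..<K}"
      by (auto simp: L_def elim!: oddE)
    then show ?thesis
      using int_card_eq_sum_of_bool[of L odd] by (simp add: card_image inj_on_def)
  qed
  moreover have "int (num_odd (conjugate xs)) = (\<Sum>k<L. (-1) ^ k * int (a k))"
    using assms(1) num_odd_conjugate alternating_sum_pad_zeros[OF len]
    by (simp add: a_def partitions_def)
  ultimately have "srank xs - (int N - (int (card (runner 0 (beta_fin L xs))) - int K)) =
      (\<Sum>k<L. of_bool (odd (a k)) - (-1) ^ k * int (a k) - int (a k)
           + of_bool (even (a k + (L - Suc k))) - of_bool (odd k))"
    using num_odd_pad_zeros[OF len] card_runner_0_beta_fin[OF assms(1) len]
      int_card_eq_sum_of_bool[of L "\<lambda>k. odd (a k)"]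
      int_card_eq_sum_of_bool[of L "\<lambda>k. even (a k + (L - Suc k))"]
    by (simp only: srank_def a_def sum_subtractf sum.distrib)
  moreover have "(4::int) dvd \<dots>"
    by (intro dvd_sum four_dvd_srank_term) (auto simp: L_def)
  ultimately show ?thesis
    by (simp add: mod_eq_dvd_iff L_def)
qed

section \<open>Equidistribution modulo 5\<close>

definition interleave :: "nat set \<times> nat set \<Rightarrow> nat set" where
  "interleave = (\<lambda>(B\<^sub>0, B\<^sub>1). (\<lambda>b. 2 * b) ` B\<^sub>0 \<union> (\<lambda>b. 2 * b + 1) ` B\<^sub>1)"

lemma interleave_runners: "interleave (runner 0 B, runner 1 B) = B"
proof (intro set_eqI iffI)
  fix x assume "x \<in> B"
  then show "x \<in> interleave (runner 0 B, runner 1 B)"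
    by (cases "even x") (auto simp: interleave_def runner_def elim!: evenE oddE)
qed (auto simp: interleave_def runner_def)

lemma runner_interleave:
  "runner 0 (interleave (B\<^sub>0, B\<^sub>1)) = B\<^sub>0" "runner 1 (interleave (B\<^sub>0, B\<^sub>1)) = B\<^sub>1"
  by (auto simp: interleave_def runner_def) presburger+

lemma interleave_card_sum:
  assumes "finite B\<^sub>0" "finite B\<^sub>1"
  shows "finite (interleave (B\<^sub>0, B\<^sub>1))"
    and "card (interleave (B\<^sub>0, B\<^sub>1)) = card B\<^sub>0 + card B\<^sub>1"
    and "\<Sum>(interleave (B\<^sub>0, B\<^sub>1)) = 2 * \<Sum>B\<^sub>0 + 2 * \<Sum>B\<^sub>1 + card B\<^sub>1"
proof -
  have inj: "inj_on (\<lambda>b. 2 * b) B\<^sub>0" "inj_on (\<lambda>b. 2 * b + 1) B\<^sub>1"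
    by (auto simp: inj_on_def)
  have disj: "(\<lambda>b. 2 * b) ` B\<^sub>0 \<inter> (\<lambda>b. 2 * b + 1) ` B\<^sub>1 = {}"
    by auto presburger
  show "finite (interleave (B\<^sub>0, B\<^sub>1))"
    using assms by (simp add: interleave_def)
  show "card (interleave (B\<^sub>0, B\<^sub>1)) = card B\<^sub>0 + card B\<^sub>1"
    using assms disj inj by (simp add: interleave_def card_Un_disjoint card_image)
  show "\<Sum>(interleave (B\<^sub>0, B\<^sub>1)) = 2 * \<Sum>B\<^sub>0 + 2 * \<Sum>B\<^sub>1 + card B\<^sub>1"
    using assms disj inj
    by (simp add: interleave_def sum.union_disjoint sum.reindex sum_distrib_left sum_Suc)
qed

lemma beta_fps_mult_nth:
  "(beta_fps a z * beta_fps b z') $ w =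
    (\<Sum>(B\<^sub>0, B\<^sub>1)\<in>{(B\<^sub>0, B\<^sub>1). finite B\<^sub>0 \<and> finite B\<^sub>1 \<and> card B\<^sub>0 = a \<and> card B\<^sub>1 = b \<and>
        \<Sum>B\<^sub>0 + \<Sum>B\<^sub>1 = w + tri a + tri b}. z ^ gaps B\<^sub>0 * z' ^ gaps B\<^sub>1)"
proof -
  define S where "S m = (\<Union>t\<le>w. beta_sets m t)" for m
  have S: "{B \<in> S m. \<Sum>B - tri m = t} = beta_sets m t" if "t \<le> w" for m t
    using that by (auto simp: S_def beta_sets_def)
  have fin: "finite (S m)" for m
    by (simp add: S_def)
  have "(beta_fps a z * beta_fps b z') $ w =
      (\<Sum>(B\<^sub>0, B\<^sub>1)\<in>{(B\<^sub>0, B\<^sub>1)\<in>S a \<times> S b. (\<Sum>B\<^sub>0 - tri a) + (\<Sum>B\<^sub>1 - tri b) = w}.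
        z ^ gaps B\<^sub>0 * z' ^ gaps B\<^sub>1)"
    by (rule fps_mult_nth_eq_sum_pairs) (simp_all add: fin S beta_fps_def)
  also have "{(B\<^sub>0, B\<^sub>1)\<in>S a \<times> S b. (\<Sum>B\<^sub>0 - tri a) + (\<Sum>B\<^sub>1 - tri b) = w} =
      {(B\<^sub>0, B\<^sub>1). finite B\<^sub>0 \<and> finite B\<^sub>1 \<and> card B\<^sub>0 = a \<and> card B\<^sub>1 = b \<and>
        \<Sum>B\<^sub>0 + \<Sum>B\<^sub>1 = w + tri a + tri b}"
  proof -
    have "(B\<^sub>0, B\<^sub>1) \<in> {(B\<^sub>0, B\<^sub>1)\<in>S a \<times> S b. (\<Sum>B\<^sub>0 - tri a) + (\<Sum>B\<^sub>1 - tri b) = w} \<longleftrightarrow>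
        finite B\<^sub>0 \<and> finite B\<^sub>1 \<and> card B\<^sub>0 = a \<and> card B\<^sub>1 = b \<and> \<Sum>B\<^sub>0 + \<Sum>B\<^sub>1 = w + tri a + tri b"
      (is "?l \<longleftrightarrow> ?r") for B\<^sub>0 B\<^sub>1
    proof
      assume ?l
      then show ?r
        by (auto simp: S_def beta_sets_def)
    next
      assume B: ?r
      then have "tri a \<le> \<Sum>B\<^sub>0" "tri b \<le> \<Sum>B\<^sub>1"
        using tri_card_le_sum by auto
      then have "B\<^sub>0 \<in> beta_sets a (\<Sum>B\<^sub>0 - tri a)" "B\<^sub>1 \<in> beta_sets b (\<Sum>B\<^sub>1 - tri b)"
          and "\<Sum>B\<^sub>0 - tri a \<le> w" "\<Sum>B\<^sub>1 - tri b \<le> w" "(\<Sum>B\<^sub>0 - tri a) + (\<Sum>B\<^sub>1 - tri b) = w"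
        using B by (auto simp: beta_sets_def)
      then show ?l
        by (auto simp: S_def)
    qed
    then show ?thesis
      by (simp add: set_eq_iff split_paired_all)
  qed
  finally show ?thesis .
qed

lemma sum_beta_sets_runners:
  assumes "c \<le> L" "2 * w + 2 * tri c + 2 * tri (L - c) + (L - c) = N + tri L"
  shows "(\<Sum>B\<in>{B\<in>beta_sets L N. card (runner 0 B) = c}. z ^ gaps (runner 0 B) * z' ^ gaps (runner 1 B)) =
    (beta_fps c z * beta_fps (L - c) z') $ w"
proof -
  let ?P = "{(B\<^sub>0, B\<^sub>1). finite B\<^sub>0 \<and> finite B\<^sub>1 \<and> card B\<^sub>0 = c \<and> card B\<^sub>1 = L - c \<and>
      \<Sum>B\<^sub>0 + \<Sum>B\<^sub>1 = w + tri c + tri (L - c)}"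
  have "bij_betw (\<lambda>B. (runner 0 B, runner 1 B)) {B\<in>beta_sets L N. card (runner 0 B) = c} ?P"
  proof (rule bij_betw_byWitness[where f' = interleave])
    show "\<forall>B\<in>{B\<in>beta_sets L N. card (runner 0 B) = c}. interleave (runner 0 B, runner 1 B) = B"
      using interleave_runners by blast
    show "\<forall>p\<in>?P. (runner 0 (interleave p), runner 1 (interleave p)) = p"
      using runner_interleave by fastforce
    show "(\<lambda>B. (runner 0 B, runner 1 B)) ` {B\<in>beta_sets L N. card (runner 0 B) = c} \<subseteq> ?P"
    proof
      fix p assume "p \<in> (\<lambda>B. (runner 0 B, runner 1 B)) ` {B\<in>beta_sets L N. card (runner 0 B) = c}"
      then obtain B where B: "B \<in> beta_sets L N" "card (runner 0 B) = c" "p = (runner 0 B, runner 1 B)"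
        by auto
      then have fin: "finite (runner 0 B)" "finite (runner 1 B)"
        by (simp_all add: beta_sets_def finite_runner)
      note props = interleave_card_sum[OF fin, unfolded interleave_runners]
      show "p \<in> ?P"
        using B props assms(2) fin by (auto simp: beta_sets_def)
    qed
    show "interleave ` ?P \<subseteq> {B\<in>beta_sets L N. card (runner 0 B) = c}"
    proof
      fix B assume "B \<in> interleave ` ?P"
      then obtain B\<^sub>0 B\<^sub>1 where "(B\<^sub>0, B\<^sub>1) \<in> ?P" "B = interleave (B\<^sub>0, B\<^sub>1)"
        by auto
      then show "B \<in> {B\<in>beta_sets L N. card (runner 0 B) = c}"
        using interleave_card_sum[of B\<^sub>0 B\<^sub>1] assms by (auto simp: beta_sets_def runner_interleave)
    qed
  qed
  then show ?thesis
    by (simp add: beta_fps_mult_nth sum.reindex_bij_betw[symmetric] case_prod_beta)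
qed

lemma two_square_minus_mod_5:
  fixes D :: int
  shows "(2 * D * D - D) mod 5 \<in> {0, 1, 3}"
proof -
  define q r where "q = D div 5" and "r = D mod 5"
  have "D = 5 * q + r"
    by (simp add: q_def r_def)
  then have "2 * D * D - D = 5 * (10 * q * q + 4 * q * r - q) + (2 * r * r - r)"
    by (simp add: algebra_simps)
  then have "(2 * D * D - D) mod 5 = (2 * r * r - r) mod 5"
    by (metis mod_mult_self4)
  moreover have "r \<in> {0, 1, 2, 3, 4}"
    by (auto simp: r_def)
  ultimately show ?thesis
    by auto
qed

text \<open>The equation determines \<open>w\<close> by \<open>2w = N - (2D^2 - D)\<close> with \<open>D = c - K\<close>.\<close>
lemma runner_exponent_bounds:
  assumes "N mod 5 = 4" "N \<le> K" "c \<le> 2 * K"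
    and "2 * w + 2 * tri c + 2 * tri (2 * K - c) + (2 * K - c) = N + tri (2 * K)"
  shows "w \<le> c" "w \<le> 2 * K - c" "w mod 5 \<in> {2, 3, 4}"
proof -
  define D where "D = int c - int K"
  have diff: "int (2 * K - c) = 2 * int K - int c"
    using assms(3) by simp
  have "2 * int w + 2 * int (tri c) + 2 * int (tri (2 * K - c)) + int (2 * K - c) = int N + int (tri (2 * K))"
    using arg_cong[OF assms(4), of int] by simp
  then have "4 * int w = 2 * int N + (2 * int K) * (2 * int K - 1) - 2 * (int c * (int c - 1))
      - 2 * ((2 * int K - int c) * (2 * int K - int c - 1)) - 2 * (2 * int K - int c)"
    using two_tri_int[of c] two_tri_int[of "2 * K - c"] two_tri_int[of "2 * K"] diff by simp
  also have "\<dots> = 2 * (int N - (2 * D * D - D))"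
    by (simp add: D_def algebra_simps)
  finally have w: "2 * int w = int N - (2 * D * D - D)"
    by simp
  have abs_D: "\<bar>D\<bar> \<le> 2 * D * D - D"
  proof (cases "D \<ge> 1")
    case True
    then show ?thesis
      by (simp add: mult_le_cancel_left1)
  next
    case False
    then show ?thesis
      by (cases "D = 0") (auto simp: mult_le_cancel_left1 mult_nonneg_nonneg zero_le_mult_iff)
  qed
  moreover have "int c = int K + D" "- \<bar>D\<bar> \<le> D" "D \<le> \<bar>D\<bar>"
    by (auto simp: D_def)
  ultimately show "w \<le> c" "w \<le> 2 * K - c"
    using w assms(2,3) by linarith+
  have "int N mod 5 = 4"
    using assms(1) by presburger
  then have "int w mod 5 \<in> {2, 3, 4}"
    using w two_square_minus_mod_5[of D] by auto presburger+
  then have "int (w mod 5) \<in> {2, 3, 4}"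
    by (simp add: zmod_int)
  then show "w mod 5 \<in> {2, 3, 4}"
    by auto
qed

lemma card_runner_le: "finite B \<Longrightarrow> card (runner c B) \<le> card B"
  by (rule card_inj_on_le[where f = "\<lambda>b. 2 * b + c"]) (auto simp: inj_on_def runner_def)

lemma sum_runner_class_fifth_root_eq_0:
  fixes z :: "'a::field_char_0"
  assumes "N mod 5 = 4" "N \<le> K" "z ^ 5 = 1" "z \<noteq> 1"
  shows "(\<Sum>B\<in>{B\<in>beta_sets (2 * K) N. card (runner 0 B) = c}.
      z ^ gaps (runner 0 B) * (z^4) ^ gaps (runner 1 B)) = 0"
proof (cases "{B\<in>beta_sets (2 * K) N. card (runner 0 B) = c} = {}")
  case False
  then obtain B where B: "B \<in> beta_sets (2 * K) N" "card (runner 0 B) = c"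
    by auto
  then have fin: "finite (runner 0 B)" "finite (runner 1 B)"
    by (simp_all add: beta_sets_def finite_runner)
  note props = interleave_card_sum[OF fin, unfolded interleave_runners]
  have card: "c \<le> 2 * K" "card (runner 1 B) = 2 * K - c"
    using B props by (auto simp: beta_sets_def)
  define w where "w = \<Sum>(runner 0 B) + \<Sum>(runner 1 B) - tri c - tri (2 * K - c)"
  have "tri c \<le> \<Sum>(runner 0 B)" "tri (2 * K - c) \<le> \<Sum>(runner 1 B)"
    using tri_card_le_sum[OF fin(1)] tri_card_le_sum[OF fin(2)] B(2) card(2) by simp_all
  moreover have "\<Sum>B = N + tri (2 * K)"
    using B(1) by (simp add: beta_sets_def)
  ultimately have eq: "2 * w + 2 * tri c + 2 * tri (2 * K - c) + (2 * K - c) = N + tri (2 * K)"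
    using props(3) card(2) unfolding w_def by linarith
  have "(beta_fps c z * beta_fps (2 * K - c) (z^4)) $ w = 0"
    using runner_exponent_bounds[OF assms(1,2) card(1) eq]
    by (intro beta_fps_mult_fifth_root_nth_eq_0[OF assms(3,4)])
  then show ?thesis
    using sum_beta_sets_runners[OF card(1) eq, of z "z^4"] by simp
next
  case True
  then show ?thesis
    by (simp only: sum.empty)
qed

lemma power_int_diff_fifth_root:
  fixes z :: "'a::field"
  assumes "z ^ 5 = 1"
  shows "z powi (int a - int b) = z ^ a * (z^4) ^ b"
proof -
  have "z \<noteq> 0"
    using assms by auto
  moreover have "(z^4) ^ b * z ^ b = 1"
    using assms by (simp flip: power_mult_distrib power_Suc2)
  ultimately show ?thesis
    by (simp add: power_int_diff field_simps)
qed

theorem sum_srank_class_fifth_root_eq_0: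
  fixes z :: "'a::field_char_0"
  assumes "N mod 5 = 4" "z ^ 5 = 1" "z \<noteq> 1"
  shows "(\<Sum>xs\<in>{xs\<in>partitions N. srank xs mod 4 = i}. z powi two_quotient_rank xs) = 0"
proof -
  define P where "P c \<longleftrightarrow> (int N - (int c - int N)) mod 4 = i" for c
  define G where "G B = z ^ gaps (runner 0 B) * (z^4) ^ gaps (runner 1 B)" for B
  define F where "F B = (if P (card (runner 0 B)) then G B else 0)" for B
  have "(\<Sum>xs\<in>{xs\<in>partitions N. srank xs mod 4 = i}. z powi two_quotient_rank xs) =
      (\<Sum>xs\<in>partitions N. F (beta_fin (2 * N) xs))"
  proof (simp only: sum.inter_filter[OF finite_partitions], intro sum.cong refl)
    fix xs assume xs: "xs \<in> partitions N"
    then have "length xs \<le> 2 * N"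
      using length_le_if_partitions by fastforce
    then show "(if srank xs mod 4 = i then z powi two_quotient_rank xs else 0) = F (beta_fin (2 * N) xs)"
      using srank_mod_4[OF xs] two_quotient_rank_eq power_int_diff_fifth_root[OF assms(2)]
      by (simp add: F_def G_def P_def)
  qed
  also have "\<dots> = (\<Sum>B\<in>beta_sets (2 * N) N. F B)"
    by (rule sum.reindex_bij_betw[OF bij_betw_beta_fin]) simp
  also have "\<dots> = (\<Sum>c\<in>{..2 * N}. \<Sum>B\<in>{B\<in>beta_sets (2 * N) N. card (runner 0 B) = c}. F B)"
  proof -
    have "(\<lambda>B. card (runner 0 B)) ` beta_sets (2 * N) N \<subseteq> {..2 * N}"
      using card_runner_le by (fastforce simp: beta_sets_def)
    then show ?thesis
      by (rule sum.group[OF finite_beta_sets finite_atMost, symmetric])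
  qed
  also have "\<dots> = 0"
  proof (rule sum.neutral, rule ballI)
    fix c
    have "(\<Sum>B\<in>{B\<in>beta_sets (2 * N) N. card (runner 0 B) = c}. F B) =
        (\<Sum>B\<in>{B\<in>beta_sets (2 * N) N. card (runner 0 B) = c}. if P c then G B else 0)"
      by (intro sum.cong) (auto simp: F_def)
    then show "(\<Sum>B\<in>{B\<in>beta_sets (2 * N) N. card (runner 0 B) = c}. F B) = 0"
      using sum_runner_class_fifth_root_eq_0[OF assms(1) order.refl assms(2,3), of c]
      by (cases "P c") (simp_all add: G_def)
  qed
  finally show ?thesis .
qed

lemma cis_power_int_neq_1:
  assumes "0 < p" "\<not> int p dvd e"
  shows "cis (2 * pi / p) powi e \<noteq> 1"
proof
  assume "cis (2 * pi / p) powi e = 1"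
  then have "cos (of_int e * (2 * pi / p)) = 1"
    by (simp add: cis_power_int complex_eq_iff)
  then obtain n :: int where "of_int e * (2 * pi / p) = of_int n * 2 * pi"
    by (auto simp: cos_one_2pi_int)
  then have "real_of_int e = real_of_int (n * int p)"
    using assms(1) by (simp add: field_simps)
  then show False
    using assms(2) by (metis dvd_triv_right mult.commute of_int_eq_iff)
qed

lemma sum_roots_of_unity_power_int:
  assumes "0 < p"
  shows "(\<Sum>z | z ^ p = 1. (z::complex) powi e) = (if int p dvd e then of_nat p else 0)"
proof (cases "int p dvd e")
  case True
  then obtain q where "e = int p * q" ..
  then have "z powi e = 1" if "z ^ p = 1" for z :: complex
    using that by (simp add: power_int_mult)
  then show ?thesis
    using True card_roots_unity_eq[OF assms] by simp
next
  case False
  let ?U = "{z::complex. z ^ p = 1}"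
  define \<zeta> where "\<zeta> = cis (2 * pi / p)"
  have "\<zeta> ^ p = 1"
    using assms by (simp add: \<zeta>_def DeMoivre)
  then have "\<zeta> \<noteq> 0"
    using assms by (auto simp: power_0_left)
  then have "bij_betw (\<lambda>z. \<zeta> * z) ?U ?U"
    using \<open>\<zeta> ^ p = 1\<close> by (intro bij_betw_byWitness[where f' = "\<lambda>z. z / \<zeta>"])
      (auto simp: power_mult_distrib power_divide)
  then have "(\<Sum>z\<in>?U. z powi e) = (\<Sum>z\<in>?U. (\<zeta> * z) powi e)"
    by (rule sum.reindex_bij_betw[symmetric])
  also have "\<dots> = \<zeta> powi e * (\<Sum>z\<in>?U. z powi e)"
    by (simp add: power_int_mult_distrib sum_distrib_left)
  finally show ?thesis
    using False cis_power_int_neq_1[OF assms False] by (simp add: \<zeta>_def)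
qed

lemma card_mod_eq_if_sums_roots_of_unity_eq_0:
  fixes f :: "'b \<Rightarrow> int" and m :: int
  assumes "finite S" "0 < p" "\<And>z::complex. z ^ p = 1 \<Longrightarrow> z \<noteq> 1 \<Longrightarrow> (\<Sum>x\<in>S. z powi f x) = 0"
  shows "p * card {x\<in>S. f x mod p = m mod p} = card S"
proof -
  let ?U = "{z::complex. z ^ p = 1}"
  have fin: "finite ?U"
    using assms(2) by (simp add: finite_roots_unity)
  have "(\<Sum>x\<in>S. \<Sum>z\<in>?U. z powi (f x - m)) =
      (\<Sum>x\<in>S. if f x mod p = m mod p then of_nat p else 0)"
    using assms(2) by (simp add: sum_roots_of_unity_power_int mod_eq_dvd_iff)
  also have "\<dots> = of_nat (p * card {x\<in>S. f x mod p = m mod p})"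
    using assms(1) by (simp add: sum.inter_filter[symmetric] mult.commute)
  finally have "of_nat (p * card {x\<in>S. f x mod p = m mod p}) = (\<Sum>x\<in>S. \<Sum>z\<in>?U. z powi (f x - m))"
    by simp
  also have "\<dots> = (\<Sum>z\<in>?U. z powi (- m) * (\<Sum>x\<in>S. z powi f x))"
  proof -
    have "z powi (f x - m) = z powi (- m) * z powi f x" if "z \<in> ?U" for z x
    proof -
      have "z \<noteq> 0"
        using that assms(2) by (auto simp: power_0_left)
      then show ?thesis
        using power_int_add[of z "- m" "f x"] by simp
    qed
    then show ?thesis
      by (subst sum.swap) (simp add: sum_distrib_left)
  qed
  also have "\<dots> = (\<Sum>z\<in>{1}. z powi (- m) * (\<Sum>x\<in>S. z powi f x))"
    using fin assms(3) by (intro sum.mono_neutral_right) auto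
  finally show ?thesis
    by (simp flip: of_nat_mult)
qed

theorem theorem2:
  fixes n :: nat and i m :: int
  assumes "i \<in> {0, 2}" and "m \<in> {0..4}"
  shows "real (card {xs \<in> partitions (5 * n + 4).
                       srank xs mod 4 = i \<and> two_quotient_rank xs mod 5 = m})
         = real (p_srank i (5 * n + 4)) / 5"
proof -
  let ?S = "{xs \<in> partitions (5 * n + 4). srank xs mod 4 = i}"
  have "5 * card {xs \<in> ?S. two_quotient_rank xs mod int 5 = m mod int 5} = card ?S"
    using finite_partitions
    by (intro card_mod_eq_if_sums_roots_of_unity_eq_0 sum_srank_class_fifth_root_eq_0) auto
  moreover have "m mod 5 = m"
    using assms(2) by simp
  ultimately have "5 * card {xs \<in> partitions (5 * n + 4). srank xs mod 4 = i \<and> two_quotient_rank xs mod 5 = m} =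
      p_srank i (5 * n + 4)"
    by (simp add: p_srank_def conj_assoc)
  then show ?thesis
    by (simp flip: of_nat_mult)
qed

end
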